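(* Let $G=\langle\alpha\rangle\oplus\langle\beta\rangle$ be the (internal) direct sum of cyclic groups, where $\alpha$ has order $m$ and $\beta$ has order $n$ (both finite). Then the interchange laws belonging to $\Sigma(G;\alpha,\beta)$ form a basis for $\Sigma(G;\alpha,\beta)$ iff $m$ and $n$ are not both multiples of $6$.
   Context: For a multiplicative abelian group $G$ generated by $\alpha$ and $\beta$, $\Sigma(G;\alpha,\beta)$ is the set of groupoid identities satisfied in the integral group ring $\mathbb{Z}[G]$ when the binary operation is $xy=\alpha x+\beta y$. A groupoid term is linear if no variable occurs in it more than once; if $p$ is a linear term and $q$ is obtained from $p$ by swapping two of its variables, then $p=q$ is an interchange law. A basis is a set of identities whose equational consequences are exactly $\Sigma(G;\alpha,\beta)$. *)

theory Defs
  imports "HOL-Algebra.Algebra"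
begin

datatype gterm = Var nat | Op gterm gterm

fun vars :: "gterm \<Rightarrow> nat set" where
  "vars (Var x) = {x}"
| "vars (Op s t) = vars s \<union> vars t"

fun linear_term :: "gterm \<Rightarrow> bool" where
  "linear_term (Var x) = True"
| "linear_term (Op s t) = (linear_term s \<and> linear_term t \<and> vars s \<inter> vars t = {})"

fun subst :: "(nat \<Rightarrow> gterm) \<Rightarrow> gterm \<Rightarrow> gterm" where
  "subst \<sigma> (Var x) = \<sigma> x"
| "subst \<sigma> (Op s t) = Op (subst \<sigma> s) (subst \<sigma> t)"

definition swap_var :: "nat \<Rightarrow> nat \<Rightarrow> nat \<Rightarrow> nat" where
  "swap_var x y z = (if z = x then y else if z = y then x else z)"

definition interchange_law :: "gterm \<times> gterm \<Rightarrow> bool" where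
  "interchange_law e = (case e of (p, q) \<Rightarrow>
     linear_term p \<and> (\<exists>x y. x \<in> vars p \<and> y \<in> vars p \<and> x \<noteq> y \<and>
        q = subst (\<lambda>z. Var (swap_var x y z)) p))"

inductive_set eq_cons :: "(gterm \<times> gterm) set \<Rightarrow> (gterm \<times> gterm) set" for E where
  ax: "e \<in> E \<Longrightarrow> e \<in> eq_cons E"
| refl: "(p, p) \<in> eq_cons E"
| sym: "(p, q) \<in> eq_cons E \<Longrightarrow> (q, p) \<in> eq_cons E"
| trans: "(p, q) \<in> eq_cons E \<Longrightarrow> (q, r) \<in> eq_cons E \<Longrightarrow> (p, r) \<in> eq_cons E"
| subst: "(p, q) \<in> eq_cons E \<Longrightarrow> (subst \<sigma> p, subst \<sigma> q) \<in> eq_cons E"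
| cong: "(p, q) \<in> eq_cons E \<Longrightarrow> (p', q') \<in> eq_cons E \<Longrightarrow> (Op p p', Op q q') \<in> eq_cons E"

definition is_basis :: "(gterm \<times> gterm) set \<Rightarrow> (gterm \<times> gterm) set \<Rightarrow> bool" where
  "is_basis B S = (eq_cons B = S)"

definition grp_ring :: "('a, 'b) monoid_scheme \<Rightarrow> ('a \<Rightarrow> int) set" where
  "grp_ring G = {f. finite {g. f g \<noteq> 0} \<and> {g. f g \<noteq> 0} \<subseteq> carrier G}"

text \<open>Product in Z[G] of the basis element a (a group element) with f.\<close>
definition gmult :: "('a, 'b) monoid_scheme \<Rightarrow> 'a \<Rightarrow> ('a \<Rightarrow> int) \<Rightarrow> ('a \<Rightarrow> int)" where
  "gmult G a f = (\<lambda>g. if g \<in> carrier G then f (inv\<^bsub>G\<^esub> a \<otimes>\<^bsub>G\<^esub> g) else 0)"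

text \<open>Evaluation of a term in Z[G] with xy = \<alpha>x + \<beta>y.\<close>
fun eval :: "('a, 'b) monoid_scheme \<Rightarrow> 'a \<Rightarrow> 'a \<Rightarrow> (nat \<Rightarrow> 'a \<Rightarrow> int) \<Rightarrow> gterm \<Rightarrow> 'a \<Rightarrow> int" where
  "eval G a b env (Var x) = env x"
| "eval G a b env (Op s t) = (\<lambda>g. gmult G a (eval G a b env s) g + gmult G b (eval G a b env t) g)"

definition Sigma_id :: "('a, 'b) monoid_scheme \<Rightarrow> 'a \<Rightarrow> 'a \<Rightarrow> (gterm \<times> gterm) set" where
  "Sigma_id G a b = {(p, q). \<forall>env. (\<forall>x. env x \<in> grp_ring G) \<longrightarrow>
       eval G a b env p = eval G a b env q}"

end

theory Submission
  imports Defs "HOL-Library.Multiset" "HOL-Library.Sublist" Complex_Main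
begin

text \<open>Weigh a node of a term reached by \<open>i\<close> left and \<open>j\<close> right steps from the root by
  \<open>\<alpha>\<^sup>i\<beta>\<^sup>j\<close>. An identity holds in \<open>\<int>[G]\<close> iff both sides have the same multiset of weighted
  leaves (weight and variable). Interchange laws, and so all their consequences, also preserve
  the multiset of weights of the inner nodes; conversely, two terms agreeing in both multisets are
  connected by swaps of parallel subterms of equal weight, each an instance of an interchange law.
  So the interchange laws form a basis iff the weighted leaves determine the inner weights.

  Inner weights \<open>N\<close> and leaf weights \<open>W\<close> of a term satisfy \<open>N + W = 1 + \<alpha>N + \<beta>N\<close>. Hence
  the difference \<open>K\<close> of the inner weights of two terms with the same leaves is a function on
  \<open>\<int>\<^sub>m \<times> \<int>\<^sub>n\<close> obeying Pascal's rule \<open>K(i+1,j+1) = K(i,j+1) + K(i+1,j)\<close>. Its generating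
  function in \<open>i\<close>, evaluated at an \<open>m\<close>-th root of unity \<open>z\<close>, is multiplied by \<open>(1 - z)\<^sup>n\<close> when
  going once around in \<open>j\<close>; so \<open>K = 0\<close> unless \<open>z\<close> and \<open>1 - z\<close> are both roots of unity, which
  makes \<open>z\<close> a primitive sixth root of unity and \<open>6\<close> a divisor of \<open>m\<close> and \<open>n\<close>. When \<open>6\<close> divides
  both, two explicit combs have the same weighted leaves but different inner weights.\<close>

text \<open>Positions are paths from the root; \<open>False\<close> steps into the left argument.\<close>

fun pos :: "gterm \<Rightarrow> bool list set" where
  "pos (Var x) = {[]}"
| "pos (Op s t) = insert [] (Cons False ` pos s \<union> Cons True ` pos t)"

fun subt_at :: "gterm \<Rightarrow> bool list \<Rightarrow> gterm" where
  "subt_at t [] = t"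
| "subt_at (Var x) (c # u) = Var x"
| "subt_at (Op s t) (c # u) = subt_at (if c then t else s) u"

definition var_at :: "gterm \<Rightarrow> bool list \<Rightarrow> nat option" where
  "var_at t u = (case subt_at t u of Var x \<Rightarrow> Some x | Op _ _ \<Rightarrow> None)"

lemma finite_pos [simp]: "finite (pos t)"
  by (induction t) auto

lemma Nil_in_pos [simp]: "[] \<in> pos t"
  by (cases t) auto

lemma Cons_in_image_Cons [simp]: "(c # u \<in> Cons d ` A) = (c = d \<and> u \<in> A)"
  by auto

lemma Cons_in_pos_Op [simp]: "(c # u \<in> pos (Op s t)) = (u \<in> pos (if c then t else s))"
  by auto

lemma Cons_in_pos: "(c # u \<in> pos t) \<longleftrightarrow> (\<exists>l r. t = Op l r \<and> u \<in> pos (if c then r else l))"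
  by (cases t) auto

lemma subt_at_append: "subt_at t (u @ v) = subt_at (subt_at t u) v"
proof (induction t u rule: subt_at.induct)
  case (2 x c u) then show ?case by (cases v) auto
qed auto

lemma append_in_pos: "u @ v \<in> pos t \<longleftrightarrow> u \<in> pos t \<and> v \<in> pos (subt_at t u)"
proof (induction u arbitrary: t)
  case (Cons c u) then show ?case by (cases t) (auto simp: Cons_in_pos)
qed simp

lemma prefix_in_pos: "u @ v \<in> pos t \<Longrightarrow> u \<in> pos t"
  by (simp add: append_in_pos)

lemma snoc_in_pos: "u @ [c] \<in> pos t \<longleftrightarrow> u \<in> pos t \<and> var_at t u = None"
  by (auto simp: append_in_pos var_at_def Cons_in_pos split: gterm.splits)

lemma var_at_proper_prefix: "u @ w \<in> pos t \<Longrightarrow> w \<noteq> [] \<Longrightarrow> var_at t u = None"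
  by (cases w) (auto simp: append_in_pos var_at_def Cons_in_pos split: gterm.splits)

lemma var_at_in_vars: "u \<in> pos t \<Longrightarrow> var_at t u = Some x \<Longrightarrow> x \<in> vars t"
proof (induction t arbitrary: u)
  case (Var y) then show ?case by (auto simp: var_at_def)
next
  case (Op l r) then show ?case by (cases u) (auto simp: var_at_def split: if_splits)
qed

lemma agree_everywhere_eq: "\<forall>u\<in>pos S. u \<in> pos T \<and> var_at S u = var_at T u \<Longrightarrow> S = T"
proof (induction S arbitrary: T)
  case (Var x)
  then have "var_at T [] = Some x" by (auto simp: var_at_def)
  then show ?case by (cases T) (auto simp: var_at_def)
next
  case (Op l r)
  then have "var_at T [] = None" by (auto simp: var_at_def)
  then obtain l' r' where T: "T = Op l' r'" by (cases T) (auto simp: var_at_def)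
  have "\<forall>u\<in>pos l. u \<in> pos l' \<and> var_at l u = var_at l' u"
  proof
    fix u assume "u \<in> pos l"
    then have "False # u \<in> pos T \<and> var_at (Op l r) (False # u) = var_at T (False # u)"
      using Op.prems by simp
    then show "u \<in> pos l' \<and> var_at l u = var_at l' u" using T by (simp add: var_at_def)
  qed
  moreover have "\<forall>u\<in>pos r. u \<in> pos r' \<and> var_at r u = var_at r' u"
  proof
    fix u assume "u \<in> pos r"
    then have "True # u \<in> pos T \<and> var_at (Op l r) (True # u) = var_at T (True # u)"
      using Op.prems by simp
    then show "u \<in> pos r' \<and> var_at r u = var_at r' u" using T by (simp add: var_at_def)
  qed
  ultimately show ?case using Op.IH T by simp
qed

fun depth :: "bool list \<Rightarrow> nat \<times> nat" where
  "depth [] = (0, 0)"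
| "depth (c # u) =
    (if c then (fst (depth u), Suc (snd (depth u))) else (Suc (fst (depth u)), snd (depth u)))"

definition shift_left :: "(nat \<times> nat) multiset \<Rightarrow> (nat \<times> nat) multiset" where
  "shift_left M = image_mset (\<lambda>(i, j). (Suc i, j)) M"

definition shift_right :: "(nat \<times> nat) multiset \<Rightarrow> (nat \<times> nat) multiset" where
  "shift_right M = image_mset (\<lambda>(i, j). (i, Suc j)) M"

definition shift_left_var :: "((nat \<times> nat) \<times> nat) multiset \<Rightarrow> ((nat \<times> nat) \<times> nat) multiset" where
  "shift_left_var M = image_mset (\<lambda>((i, j), x). ((Suc i, j), x)) M"

definition shift_right_var :: "((nat \<times> nat) \<times> nat) multiset \<Rightarrow> ((nat \<times> nat) \<times> nat) multiset" where
  "shift_right_var M = image_mset (\<lambda>((i, j), x). ((i, Suc j), x)) M"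

fun inner_depths :: "gterm \<Rightarrow> (nat \<times> nat) multiset" where
  "inner_depths (Var x) = {#}"
| "inner_depths (Op s t) = {#(0, 0)#} + shift_left (inner_depths s) + shift_right (inner_depths t)"

fun leaf_depths :: "gterm \<Rightarrow> ((nat \<times> nat) \<times> nat) multiset" where
  "leaf_depths (Var x) = {#((0, 0), x)#}"
| "leaf_depths (Op s t) = shift_left_var (leaf_depths s) + shift_right_var (leaf_depths t)"

definition inner_pos :: "gterm \<Rightarrow> bool list set" where
  "inner_pos t = {u \<in> pos t. var_at t u = None}"

definition leaf_pos :: "gterm \<Rightarrow> bool list set" where
  "leaf_pos t = {u \<in> pos t. var_at t u \<noteq> None}"

lemma inner_pos_Var [simp]: "inner_pos (Var x) = {}"
  by (auto simp: inner_pos_def var_at_def)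

lemma inner_pos_Op: "inner_pos (Op s t) = insert [] (Cons False ` inner_pos s \<union> Cons True ` inner_pos t)"
  by (auto simp: inner_pos_def var_at_def)

lemma finite_inner_pos [simp]: "finite (inner_pos t)"
  by (simp add: inner_pos_def)

lemma leaf_pos_Var [simp]: "leaf_pos (Var x) = {[]}"
  by (auto simp: leaf_pos_def var_at_def)

lemma leaf_pos_Op: "leaf_pos (Op s t) = Cons False ` leaf_pos s \<union> Cons True ` leaf_pos t"
  by (auto simp: leaf_pos_def var_at_def)

lemma finite_leaf_pos [simp]: "finite (leaf_pos t)"
  by (simp add: leaf_pos_def)

lemma inner_depths_conv: "inner_depths t = image_mset depth (mset_set (inner_pos t))"
proof (induction t)
  case (Op l r)
  have "mset_set (inner_pos (Op l r)) =
      {#[]#} + mset_set (Cons False ` inner_pos l) + mset_set (Cons True ` inner_pos r)"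
  proof -
    have "[] \<notin> Cons False ` inner_pos l \<union> Cons True ` inner_pos r"
      and "Cons False ` inner_pos l \<inter> Cons True ` inner_pos r = {}" by auto
    then show ?thesis unfolding inner_pos_Op by (simp add: mset_set_Union)
  qed
  also have "\<dots> = {#[]#} + image_mset (Cons False) (mset_set (inner_pos l))
                         + image_mset (Cons True) (mset_set (inner_pos r))"
    by (simp add: image_mset_mset_set)
  finally show ?case using Op
    by (simp add: shift_left_def shift_right_def multiset.map_comp o_def case_prod_beta)
qed simp

lemma leaf_depths_conv:
  "leaf_depths t = image_mset (\<lambda>u. (depth u, the (var_at t u))) (mset_set (leaf_pos t))"
proof (induction t)
  case (Op l r)
  have "mset_set (leaf_pos (Op l r)) = mset_set (Cons False ` leaf_pos l) + mset_set (Cons True ` leaf_pos r)"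
    unfolding leaf_pos_Op by (rule mset_set_Union) auto
  also have "\<dots> = image_mset (Cons False) (mset_set (leaf_pos l)) + image_mset (Cons True) (mset_set (leaf_pos r))"
    by (simp add: image_mset_mset_set)
  finally show ?case using Op
    by (simp add: shift_left_var_def shift_right_var_def multiset.map_comp o_def case_prod_beta var_at_def)
qed (simp add: var_at_def)

lemma count_image_mset_set: "finite A \<Longrightarrow> count (image_mset f (mset_set A)) y = card {x \<in> A. f x = y}"
  by (simp add: count_image_mset count_mset_set' vimage_def Int_def conj_commute)

lemma count_image_inner_depths:
  "count (image_mset \<phi> (inner_depths t)) g = card {u \<in> pos t. var_at t u = None \<and> \<phi> (depth u) = g}"
  unfolding inner_depths_conv multiset.map_comp count_image_mset_set[OF finite_inner_pos]
  by (simp add: inner_pos_def conj_assoc)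

lemma count_image_leaf_depths:
  "count (image_mset (apfst \<phi>) (leaf_depths t)) (g, x) =
   card {u \<in> pos t. var_at t u = Some x \<and> \<phi> (depth u) = g}"
  unfolding leaf_depths_conv multiset.map_comp count_image_mset_set[OF finite_leaf_pos]
  by (rule arg_cong[where f=card]) (auto simp: leaf_pos_def)

lemma card_pos_leaf_depths: "card (pos t) + 1 = 2 * size (leaf_depths t)"
proof (induction t)
  case (Op l r)
  have "card (pos (Op l r)) = Suc (card (Cons False ` pos l \<union> Cons True ` pos r))"
    unfolding pos.simps by (rule card_insert_disjoint) auto
  also have "card (Cons False ` pos l \<union> Cons True ` pos r) = card (pos l) + card (pos r)"
    by (subst card_Un_disjoint) (auto simp: card_image)
  finally show ?case using Op by (simp add: shift_left_var_def shift_right_var_def)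
qed simp

lemma card_pos_eq_if_leaf_depths_eq:
  assumes "image_mset (apfst \<phi>) (leaf_depths S) = image_mset (apfst \<phi>) (leaf_depths T)"
  shows "card (pos S) = card (pos T)"
  using arg_cong[OF assms, of size] card_pos_leaf_depths[of S] card_pos_leaf_depths[of T] by simp

lemma leaf_depths_rename:
  "leaf_depths (subst (\<lambda>z. Var (f z)) t) = image_mset (\<lambda>(w, x). (w, f x)) (leaf_depths t)"
  by (induction t) (auto simp: shift_left_var_def shift_right_var_def multiset.map_comp o_def case_prod_beta)

lemma inner_depths_rename: "inner_depths (subst (\<lambda>z. Var (f z)) t) = inner_depths t"
  by (induction t) auto

lemma inner_leaf_depths_rel:
  "inner_depths t + image_mset fst (leaf_depths t) = {#(0, 0)#} + shift_left (inner_depths t) + shift_right (inner_depths t)"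
proof (induction t)
  case (Var x) then show ?case by (simp add: shift_left_def shift_right_def)
next
  case (Op s t)
  have fA: "image_mset fst (shift_left_var M) = shift_left (image_mset fst M)" for M
    by (simp add: shift_left_var_def shift_left_def multiset.map_comp o_def case_prod_beta)
  have fB: "image_mset fst (shift_right_var M) = shift_right (image_mset fst M)" for M
    by (simp add: shift_right_var_def shift_right_def multiset.map_comp o_def case_prod_beta)
  have "inner_depths (Op s t) + image_mset fst (leaf_depths (Op s t)) =
        {#(0, 0)#} + shift_left (inner_depths s + image_mset fst (leaf_depths s))
                   + shift_right (inner_depths t + image_mset fst (leaf_depths t))"
    by (simp add: fA fB shift_left_def shift_right_def add_ac)
  also have "\<dots> = {#(0, 0)#} + shift_left (inner_depths (Op s t)) + shift_right (inner_depths (Op s t))"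
    unfolding Op.IH by (simp add: shift_left_def shift_right_def multiset.map_comp o_def case_prod_beta add_ac)
  finally show ?case .
qed

lemma leaf_depths_vars: "z \<in># leaf_depths t \<Longrightarrow> snd z \<in> vars t"
  by (induction t arbitrary: z) (auto simp: shift_left_var_def shift_right_var_def)

fun pos_code :: "bool list \<Rightarrow> nat" where
  "pos_code [] = 1"
| "pos_code (c # u) = 2 * pos_code u + (if c then 1 else 0)"

lemma pos_code_gt_0: "pos_code u > 0"
  by (induction u) auto

lemma inj_pos_code: "inj pos_code"
proof (rule injI)
  fix u v show "pos_code u = pos_code v \<Longrightarrow> u = v"
  proof (induction u arbitrary: v)
    case Nil then show ?case using pos_code_gt_0[of "tl v"] by (cases v) (auto split: if_splits)
  next
    case (Cons c u)
    show ?case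
    proof (cases v)
      case Nil then show ?thesis using Cons pos_code_gt_0[of u] by (auto split: if_splits)
    next
      case (Cons d v')
      then have "2 * pos_code u + (if c then 1 else 0) = 2 * pos_code v' + (if d then 1 else 0)"
        using Cons.prems by simp
      then have "c = d \<and> pos_code u = pos_code v'" by (auto split: if_splits; presburger)
      then show ?thesis using Cons.IH Cons by auto
    qed
  qed
qed

text \<open>\<open>linearize t H u\<close> cuts the subterm \<open>t\<close> at position \<open>u\<close> of some term at the positions
  in \<open>H\<close> and at its leaves, naming each cut by the code of its position. The result is linear,
  and its instances are the graftings of arbitrary subterms at the cuts.\<close>

fun linearize :: "gterm \<Rightarrow> bool list set \<Rightarrow> bool list \<Rightarrow> gterm" where
  "linearize (Var x) H u = Var (pos_code u)"
| "linearize (Op l r) H u =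
    (if u \<in> H then Var (pos_code u) else Op (linearize l H (u @ [False])) (linearize r H (u @ [True])))"

fun graft :: "gterm \<Rightarrow> bool list set \<Rightarrow> bool list \<Rightarrow> (bool list \<Rightarrow> gterm) \<Rightarrow> gterm" where
  "graft (Var x) H u f = f u"
| "graft (Op l r) H u f =
    (if u \<in> H then f u else Op (graft l H (u @ [False]) f) (graft r H (u @ [True]) f))"

lemma subst_linearize: "subst (\<lambda>c. f (inv_into UNIV pos_code c)) (linearize t H u) = graft t H u f"
  by (induction t H u f rule: graft.induct) (auto simp: inv_f_f[OF inj_pos_code])

lemma graft_subt_at: "subt_at T u = t \<Longrightarrow> graft t H u (subt_at T) = t"
proof (induction t arbitrary: u)
  case (Op l r) then show ?case by (auto simp: subt_at_append)
qed auto

lemma vars_linearize: "x \<in> vars (linearize t H u) \<Longrightarrow> \<exists>w. x = pos_code (u @ w)"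
proof (induction t H u rule: linearize.induct)
  case (1 y H u) then show ?case by (auto intro: exI[of _ "[]"])
next
  case (2 l r H u) then show ?case by (auto split: if_splits intro: exI[of _ "[]"])
qed

lemma linear_linearize: "linear_term (linearize t H u)"
proof (induction t H u rule: linearize.induct)
  case (2 l r H u)
  have "vars (linearize l H (u @ [False])) \<inter> vars (linearize r H (u @ [True])) = {}"
  proof (rule ccontr)
    assume "\<not> ?thesis"
    then obtain w1 w2 where "pos_code ((u @ [False]) @ w1) = pos_code ((u @ [True]) @ w2)"
      using vars_linearize by (metis disjoint_iff)
    then show False using inj_pos_code by (auto dest: injD)
  qed
  with 2 show ?case by auto
qed simp

lemma var_at_linearize:
  "v \<in> pos (linearize t H u) \<Longrightarrow> var_at (linearize t H u) v = Some c \<Longrightarrow> c = pos_code (u @ v)"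
proof (induction t H u arbitrary: v rule: linearize.induct)
  case (1 y H u) then show ?case by (cases v) (auto simp: var_at_def)
next
  case (2 l r H u) then show ?case by (cases v) (auto simp: var_at_def split: if_splits)
qed

lemma var_at_linearize_cut:
  assumes "p \<in> pos T" "p \<in> H" "\<forall>h\<in>H. \<not> strict_prefix h p"
  shows "subt_at T u = t \<Longrightarrow> u @ v = p \<Longrightarrow>
    v \<in> pos (linearize t H u) \<and> var_at (linearize t H u) v = Some (pos_code p)"
proof (induction t arbitrary: u v)
  case (Var x)
  then have "v \<in> pos (Var x)" using assms(1) append_in_pos by metis
  with Var show ?case by (auto simp: var_at_def)
next
  case (Op l r)
  show ?case
  proof (cases "u \<in> H")
    case True
    then have "v = []" using assms(3) Op.prems by (auto simp: strict_prefix_def prefix_def)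
    with True Op.prems show ?thesis by (auto simp: var_at_def)
  next
    case False
    then obtain c v' where v: "v = c # v'" using Op.prems assms(2) by (cases v) auto
    have "subt_at T (u @ [c]) = (if c then r else l)" using Op.prems by (simp add: subt_at_append)
    moreover have "(u @ [c]) @ v' = p" using Op.prems v by simp
    ultimately show ?thesis using Op.IH[of "u @ [c]" v'] False v by (cases c) (auto simp: var_at_def)
  qed
qed

lemma pos_graft:
  assumes "\<And>v. v \<notin> H \<Longrightarrow> f v = subt_at T v"
  shows "subt_at T u = t \<Longrightarrow> u \<in> pos T \<Longrightarrow> \<forall>h\<in>H. \<not> strict_prefix h (u @ v) \<Longrightarrow>
    (v \<in> pos (graft t H u f) \<longleftrightarrow> u @ v \<in> pos T) \<and>
    (v \<in> pos (graft t H u f) \<longrightarrow>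
       var_at (graft t H u f) v = (if u @ v \<in> H then var_at (f (u @ v)) [] else var_at T (u @ v)))"
proof (induction t arbitrary: u v)
  case (Var x)
  show ?case
  proof (cases v)
    case Nil with Var assms show ?thesis by (auto simp: var_at_def)
  next
    case (Cons c v')
    then have "u \<notin> H" using Var.prems(3) by (auto simp: strict_prefix_def prefix_def)
    then have "f u = Var x" using assms Var.prems by auto
    moreover have "u @ v \<notin> pos T" using Var.prems Cons by (auto simp: append_in_pos)
    ultimately show ?thesis using Cons by simp
  qed
next
  case (Op l r)
  show ?case
  proof (cases "u \<in> H")
    case True
    then have "v = []" using Op.prems(3) by (auto simp: strict_prefix_def prefix_def)
    with True Op.prems show ?thesis by auto
  next
    case False
    show ?thesis
    proof (cases v)
      case Nil with False Op.prems show ?thesis by (auto simp: var_at_def)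
    next
      case (Cons c v')
      let ?t = "if c then r else l"
      have "subt_at T (u @ [c]) = ?t" using Op.prems by (simp add: subt_at_append)
      moreover have "u @ [c] \<in> pos T" using Op.prems by (simp add: snoc_in_pos var_at_def)
      moreover have "(u @ [c]) @ v' = u @ v" using Cons by simp
      ultimately have "(v' \<in> pos (graft ?t H (u @ [c]) f) \<longleftrightarrow> u @ v \<in> pos T) \<and>
        (v' \<in> pos (graft ?t H (u @ [c]) f) \<longrightarrow> var_at (graft ?t H (u @ [c]) f) v' =
           (if u @ v \<in> H then var_at (f (u @ v)) [] else var_at T (u @ v)))"
        using Op.IH(1)[of "u @ [c]" v'] Op.IH(2)[of "u @ [c]" v'] Op.prems by (cases c) auto
      then show ?thesis using False Cons by (cases c) (auto simp: var_at_def)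
    qed
  qed
qed

section \<open>Swapping parallel subterms\<close>

definition swap_at :: "gterm \<Rightarrow> bool list \<Rightarrow> bool list \<Rightarrow> gterm" where
  "swap_at T p q =
     graft T {p, q} [] (\<lambda>u. if u = p then subt_at T q else if u = q then subt_at T p else subt_at T u)"

lemma pos_swap_at:
  assumes "\<not> strict_prefix p v" and "\<not> strict_prefix q v"
  shows "(v \<in> pos (swap_at T p q) \<longleftrightarrow> v \<in> pos T) \<and>
    (v \<in> pos (swap_at T p q) \<longrightarrow> var_at (swap_at T p q) v =
       (if v = p then var_at T q else if v = q then var_at T p else var_at T v))"
  using pos_graft[of "{p, q}" _ T "[]" T v] assms unfolding swap_at_def
  by (auto simp: var_at_def)

definition agreement :: "gterm \<Rightarrow> gterm \<Rightarrow> nat" where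
  "agreement S T = card {u \<in> pos S. u \<in> pos T \<and> var_at S u = var_at T u}"

lemma agreement_sym: "agreement S T = agreement T S"
  unfolding agreement_def by (rule arg_cong[where f=card]) auto

lemma agreement_le: "agreement S T \<le> card (pos S)"
  unfolding agreement_def by (rule card_mono) auto

lemma exists_disagreement:
  assumes "S \<noteq> T"
  shows "\<exists>p. p \<in> pos S \<and> p \<in> pos T \<and> var_at S p \<noteq> var_at T p"
proof -
  let ?bad = "\<lambda>u. u \<in> pos S \<and> \<not> (u \<in> pos T \<and> var_at S u = var_at T u)"
  have "\<exists>u. ?bad u" using agree_everywhere_eq assms by blast
  then obtain p where p: "?bad p" and min: "\<And>v. ?bad v \<Longrightarrow> length p \<le> length v"
    using ex_has_least_nat[of ?bad _ length] by blast
  have "p \<in> pos T"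
  proof (cases p rule: rev_exhaust)
    case (snoc p' c)
    with p have "p' \<in> pos S" "var_at S p' = None" using snoc_in_pos by auto
    with min[of p'] snoc have "p' \<in> pos T \<and> var_at T p' = None" by fastforce
    with snoc show ?thesis using snoc_in_pos by auto
  qed simp
  with p show ?thesis by blast
qed

text \<open>Both terms have equally many positions with the label and weight of \<open>p\<close> in \<open>S\<close>, and \<open>p\<close>
  is one of them only in \<open>S\<close>.\<close>

lemma exists_unmatched_position:
  assumes N: "image_mset \<phi> (inner_depths S) = image_mset \<phi> (inner_depths T)"
    and L: "image_mset (apfst \<phi>) (leaf_depths S) = image_mset (apfst \<phi>) (leaf_depths T)"
    and pS: "p \<in> pos S" and ne: "var_at S p \<noteq> var_at T p"
  shows "\<exists>q. q \<in> pos T \<and> var_at T q = var_at S p \<and> \<phi> (depth q) = \<phi> (depth p) \<and>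
    \<not> (q \<in> pos S \<and> var_at S q = var_at T q)"
proof -
  define Q where "Q = {u \<in> pos T. var_at T u = var_at S p \<and> \<phi> (depth u) = \<phi> (depth p)}"
  define P where "P = {u \<in> pos S. var_at S u = var_at S p \<and> \<phi> (depth u) = \<phi> (depth p)}"
  have "card Q = card P"
  proof (cases "var_at S p")
    case None
    then show ?thesis using arg_cong[OF N, of "\<lambda>M. count M (\<phi> (depth p))"]
      unfolding Q_def P_def count_image_inner_depths by simp
  next
    case (Some x)
    then show ?thesis using arg_cong[OF L, of "\<lambda>M. count M (\<phi> (depth p), x)"]
      unfolding Q_def P_def count_image_leaf_depths by simp
  qed
  moreover have "p \<in> P" "p \<notin> Q" using pS ne by (auto simp: P_def Q_def)
  moreover have "finite P" by (simp add: P_def)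
  ultimately have "\<not> Q \<subseteq> P"
    using psubset_card_mono[of P Q] by (metis less_irrefl psubsetI)
  then obtain q where "q \<in> Q" "q \<notin> P" by blast
  then show ?thesis by (auto simp: Q_def P_def)
qed

lemma exists_agreement_increasing_swap:
  assumes N: "image_mset \<phi> (inner_depths S) = image_mset \<phi> (inner_depths T)"
    and L: "image_mset (apfst \<phi>) (leaf_depths S) = image_mset (apfst \<phi>) (leaf_depths T)"
    and pS: "p \<in> pos S" and pT: "p \<in> pos T" and ne: "var_at S p \<noteq> var_at T p"
    and leaf: "var_at T p \<noteq> None"
  shows "\<exists>q. q \<in> pos T \<and> p \<parallel> q \<and> \<phi> (depth p) = \<phi> (depth q) \<and>
    agreement S (swap_at T p q) > agreement S T"
proof -
  obtain q where qT: "q \<in> pos T" and stq: "var_at T q = var_at S p"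
    and wq: "\<phi> (depth q) = \<phi> (depth p)" and unm: "\<not> (q \<in> pos S \<and> var_at S q = var_at T q)"
    using exists_unmatched_position[OF N L pS ne] by blast
  have not_below_p: "\<not> strict_prefix p u" if "u \<in> pos T" for u
    using var_at_proper_prefix[of p _ T] leaf that by (auto simp: strict_prefix_def prefix_def)
  have not_below_q: "\<not> strict_prefix q u" if "u \<in> pos S" "u \<in> pos T" for u
    using var_at_proper_prefix[of q _ T] var_at_proper_prefix[of q _ S] prefix_in_pos unm that
    by (force simp: strict_prefix_def prefix_def)
  have "p \<parallel> q"
  proof
    show "\<not> prefix p q"
      using not_below_p[OF qT] ne stq by (auto simp: strict_prefix_def)
    show "\<not> prefix q p"
      using not_below_q[OF pS pT] ne stq by (auto simp: strict_prefix_def)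
  qed
  then have pq: "\<not> strict_prefix p p" "\<not> strict_prefix q p" "p \<noteq> q"
    by (auto simp: strict_prefix_def parallel_def)
  define Old where "Old = {u \<in> pos S. u \<in> pos T \<and> var_at S u = var_at T u}"
  define New where "New = {u \<in> pos S. u \<in> pos (swap_at T p q) \<and> var_at S u = var_at (swap_at T p q) u}"
  have "Old \<subseteq> New"
  proof
    fix u assume u: "u \<in> Old"
    then have "u \<noteq> p" "u \<noteq> q" using ne unm by (auto simp: Old_def)
    with u show "u \<in> New"
      using pos_swap_at[OF not_below_p not_below_q, of u T] by (auto simp: Old_def New_def)
  qed
  moreover have "p \<in> New" "p \<notin> Old"
    using pos_swap_at[OF pq(1,2), of T] pS pT stq ne by (auto simp: New_def Old_def)
  moreover have "finite New" by (simp add: New_def)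
  ultimately have "card Old < card New" by (metis psubsetI psubset_card_mono)
  then have "agreement S T < agreement S (swap_at T p q)"
    unfolding agreement_def Old_def New_def .
  with qT \<open>p \<parallel> q\<close> wq show ?thesis by auto
qed

text \<open>Induction on the number of positions where \<open>S\<close> and \<open>T\<close> disagree: swapping in the term
  that has a leaf at a disagreement decreases it.\<close>

lemma swap_connected:
  assumes refl: "\<And>t. (t, t) \<in> E"
    and sym: "\<And>s t. (s, t) \<in> E \<Longrightarrow> (t, s) \<in> E"
    and trans: "\<And>r s t. (r, s) \<in> E \<Longrightarrow> (s, t) \<in> E \<Longrightarrow> (r, t) \<in> E"
    and swap: "\<And>T p q. p \<in> pos T \<Longrightarrow> q \<in> pos T \<Longrightarrow> p \<parallel> q \<Longrightarrow> \<phi> (depth p) = \<phi> (depth q) \<Longrightarrow>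
       (T, swap_at T p q) \<in> E"
    and inv_N: "\<And>s t. (s, t) \<in> E \<Longrightarrow> image_mset \<phi> (inner_depths s) = image_mset \<phi> (inner_depths t)"
    and inv_L: "\<And>s t. (s, t) \<in> E \<Longrightarrow>
       image_mset (apfst \<phi>) (leaf_depths s) = image_mset (apfst \<phi>) (leaf_depths t)"
  shows "image_mset \<phi> (inner_depths S) = image_mset \<phi> (inner_depths T) \<Longrightarrow>
    image_mset (apfst \<phi>) (leaf_depths S) = image_mset (apfst \<phi>) (leaf_depths T) \<Longrightarrow> (S, T) \<in> E"
proof (induction "card (pos S) - agreement S T" arbitrary: S T rule: less_induct)
  case less
  show ?case
  proof (cases "S = T")
    case False
    then obtain p where p: "p \<in> pos S" "p \<in> pos T" and ne: "var_at S p \<noteq> var_at T p"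
      using exists_disagreement by blast
    show ?thesis
    proof (cases "var_at T p = None")
      case False
      from exists_agreement_increasing_swap[OF less.prems p ne False] obtain q where
        q: "q \<in> pos T" "p \<parallel> q" "\<phi> (depth p) = \<phi> (depth q)" "agreement S (swap_at T p q) > agreement S T"
        by blast
      define T' where "T' = swap_at T p q"
      have E1: "(T, T') \<in> E" using swap[OF p(2) q(1-3)] by (simp add: T'_def)
      have "card (pos S) - agreement S T' < card (pos S) - agreement S T"
        using q(4) agreement_le[of S T'] by (simp add: T'_def)
      then have "(S, T') \<in> E" using less inv_N[OF E1] inv_L[OF E1] by simp
      then show ?thesis using trans sym E1 by blast
    next
      case True
      with ne have "var_at S p \<noteq> None" by simp
      from exists_agreement_increasing_swap[OF less.prems[symmetric] p(2,1) ne[symmetric] this]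
      obtain q where
        q: "q \<in> pos S" "p \<parallel> q" "\<phi> (depth p) = \<phi> (depth q)" "agreement T (swap_at S p q) > agreement T S"
        by blast
      define S' where "S' = swap_at S p q"
      have E1: "(S, S') \<in> E" using swap[OF p(1) q(1-3)] by (simp add: S'_def)
      have "card (pos S') = card (pos S)" "card (pos S') = card (pos T)"
        using card_pos_eq_if_leaf_depths_eq inv_L[OF E1] less.prems(2) by metis+
      then have "card (pos S') - agreement S' T < card (pos S) - agreement S T"
        using q(4) agreement_le[of T S'] agreement_sym[of S' T] agreement_sym[of S T]
        by (simp add: S'_def)
      then have "(S', T) \<in> E" using less inv_N[OF E1] inv_L[OF E1] by simp
      then show ?thesis using trans E1 by blast
    qed
  qed (simp add: refl)
qed

lemma subst_subst: "subst \<sigma> (subst \<tau> t) = subst (\<lambda>x. subst \<sigma> (\<tau> x)) t"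
  by (induction t) auto

lemma subst_cong: "(\<And>x. x \<in> vars t \<Longrightarrow> \<sigma>1 x = \<sigma>2 x) \<Longrightarrow> subst \<sigma>1 t = subst \<sigma>2 t"
  by (induction t) auto

lemma linear_interchange_instance:
  assumes pT: "p \<in> pos T" and qT: "q \<in> pos T" and pq: "p \<parallel> q"
  defines "P \<equiv> linearize T {p, q} []"
    and "sw \<equiv> swap_var (pos_code p) (pos_code q)"
    and "\<sigma> \<equiv> \<lambda>c. subt_at T (inv_into UNIV pos_code c)"
  shows "interchange_law (P, subst (\<lambda>z. Var (sw z)) P)"
    and "subst \<sigma> P = T" and "subst \<sigma> (subst (\<lambda>z. Var (sw z)) P) = swap_at T p q"
    and "{u \<in> pos P. var_at P u = Some (pos_code p)} = {p}"
    and "{u \<in> pos P. var_at P u = Some (pos_code q)} = {q}"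
proof -
  have cut: "\<forall>h\<in>{p, q}. \<not> strict_prefix h p" "\<forall>h\<in>{p, q}. \<not> strict_prefix h q"
    using pq by (auto simp: strict_prefix_def parallel_def)
  have hp: "p \<in> pos P \<and> var_at P p = Some (pos_code p)"
    unfolding P_def using var_at_linearize_cut[OF pT _ cut(1)] by simp
  have hq: "q \<in> pos P \<and> var_at P q = Some (pos_code q)"
    unfolding P_def using var_at_linearize_cut[OF qT _ cut(2)] by simp
  have "pos_code p \<noteq> pos_code q" using pq inj_pos_code by (auto simp: parallel_def dest: injD)
  then show "interchange_law (P, subst (\<lambda>z. Var (sw z)) P)"
    unfolding interchange_law_def sw_def using hp hq linear_linearize[of T "{p, q}" "[]"]
    by (auto simp: P_def intro: var_at_in_vars)
  have uniq: "\<And>u r. u \<in> pos P \<Longrightarrow> var_at P u = Some (pos_code r) \<Longrightarrow> u = r"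
    unfolding P_def using var_at_linearize inj_pos_code by (metis append_Nil injD)
  show "{u \<in> pos P. var_at P u = Some (pos_code p)} = {p}" using hp uniq by blast
  show "{u \<in> pos P. var_at P u = Some (pos_code q)} = {q}" using hq uniq by blast
  show "subst \<sigma> P = T"
    unfolding P_def \<sigma>_def subst_linearize using graft_subt_at[of T "[]" T] by simp
  define f where "f = (\<lambda>u. if u = p then subt_at T q else if u = q then subt_at T p else subt_at T u)"
  have "subst \<sigma> (subst (\<lambda>z. Var (sw z)) P) = subst (\<lambda>c. \<sigma> (sw c)) P"
    by (simp add: subst_subst)
  also have "\<dots> = subst (\<lambda>c. f (inv_into UNIV pos_code c)) P"
  proof (rule subst_cong)
    fix c assume "c \<in> vars P"
    then obtain w where c: "c = pos_code w" using vars_linearize unfolding P_def by fastforce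
    have "sw c = pos_code (if w = p then q else if w = q then p else w)"
      using inj_pos_code c by (auto simp: sw_def swap_var_def dest: injD)
    then show "\<sigma> (sw c) = f (inv_into UNIV pos_code c)"
      unfolding \<sigma>_def f_def c by (simp add: inv_f_f[OF inj_pos_code])
  qed
  also have "\<dots> = swap_at T p q" unfolding P_def subst_linearize by (simp add: swap_at_def f_def)
  finally show "subst \<sigma> (subst (\<lambda>z. Var (sw z)) P) = swap_at T p q" .
qed

section \<open>Periodic solutions of the Pascal recurrence\<close>

lemma six_dvd_if_root:
  fixes z :: complex
  assumes q: "z\<^sup>2 = z - 1" and zm: "z ^ m = 1"
  shows "6 dvd m"
proof -
  have z3: "z ^ 3 = -1"
  proof -
    have "z ^ 3 = z * z\<^sup>2" by (simp add: power_def)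
    also have "\<dots> = z * (z - 1)" using q by simp
    also have "\<dots> = z\<^sup>2 - z" by (simp add: algebra_simps power2_eq_square)
    finally show ?thesis using q by simp
  qed
  have "z ^ 6 = (z ^ 3)\<^sup>2" by (simp flip: power_mult)
  then have z6: "z ^ 6 = 1" using z3 by simp
  have "z ^ m = (z ^ 6) ^ (m div 6) * z ^ (m mod 6)"
    by (simp flip: power_mult power_add)
  then have zr: "z ^ (m mod 6) = 1" using z6 zm by simp
  have "m mod 6 < 6" by simp
  then consider "m mod 6 = 0" | "m mod 6 = 1" | "m mod 6 = 2" | "m mod 6 = 3" | "m mod 6 = 4"
    | "m mod 6 = 5" by linarith
  then show ?thesis
  proof cases
    case 1 then show ?thesis by presburger
  next
    case 2 then show ?thesis using zr q by simp
  next
    case 3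
    then have "z - 1 = 1" using zr q by simp
    then have "z = 2" by (simp add: algebra_simps)
    then show ?thesis using q by (simp add: power2_eq_square)
  next
    case 4 then show ?thesis using zr z3 by simp
  next
    case 5
    have "z ^ 4 = z * z ^ 3" by (simp add: power_def)
    then have "z ^ 4 = - z" using z3 by simp
    then have "z = -1" using zr 5 by (simp add: minus_equation_iff)
    then show ?thesis using q by (simp add: power2_eq_square)
  next
    case 6
    have "z ^ 5 = z\<^sup>2 * z ^ 3" by (simp flip: power_add)
    then have "z ^ 5 = 1 - z" using z3 q by (simp add: algebra_simps)
    then show ?thesis using zr 6 q by simp
  qed
qed

lemma root_of_unity_mult_cnj:
  fixes z :: complex
  assumes "z ^ m = 1" "m > 0"
  shows "z * cnj z = 1"
proof -
  have "norm z ^ m = 1 ^ m" using assms by (simp flip: norm_power)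
  then have "norm z = 1" using assms power_eq_iff_eq_base[of m "norm z" 1] by simp
  then show ?thesis using complex_norm_square[of z] by simp
qed

text \<open>If \<open>z\<close> and \<open>1 - z\<close> are both roots of unity, then \<open>|z| = |1 - z| = 1\<close> forces \<open>z\<close> to be a
  primitive sixth root of unity.\<close>

lemma six_dvd_if_roots_of_unity:
  fixes z :: complex
  assumes zm: "z ^ m = 1" and wn: "(1 - z) ^ n = 1" and m: "m > 0" and n: "n > 0"
  shows "6 dvd m \<and> 6 dvd n"
proof -
  have a: "z * cnj z = 1" using root_of_unity_mult_cnj[OF zm m] .
  have "(1 - z) * cnj (1 - z) = 1" using root_of_unity_mult_cnj[OF wn n] .
  then have "1 - z - cnj z + z * cnj z = 1" by (simp add: algebra_simps)
  then have "cnj z = 1 - z" using a by (simp add: algebra_simps)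
  then have "z * (1 - z) = 1" using a by simp
  then have q: "z\<^sup>2 = z - 1" by (simp add: algebra_simps power2_eq_square)
  then have "(1 - z)\<^sup>2 = (1 - z) - 1" by (simp add: algebra_simps power2_eq_square)
  then show ?thesis using six_dvd_if_root[OF q zm] six_dvd_if_root[OF _ wn] by simp
qed

lemma sum_lessThan_shift_periodic:
  fixes h :: "nat \<Rightarrow> 'a::cancel_comm_monoid_add"
  assumes "h m = h 0"
  shows "(\<Sum>i<m. h (Suc i)) = (\<Sum>i<m. h i)"
proof -
  have "(\<Sum>i<Suc m. h i) = h 0 + (\<Sum>i<m. h (Suc i))" by (rule sum.lessThan_Suc_shift)
  moreover have "(\<Sum>i<Suc m. h i) = (\<Sum>i<m. h i) + h m" by simp
  ultimately show ?thesis using assms by (metis add.commute add_left_cancel)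
qed

lemma cis_pow_neq_1:
  assumes m: "m > 0" and r: "0 < r" "r < m"
  shows "cis (2 * pi / real m) ^ r \<noteq> 1"
proof
  assume h: "cis (2 * pi / real m) ^ r = 1"
  have inj: "inj_on (\<lambda>k. cis (2 * pi * real k / real m)) {..<m}"
    using bij_betw_roots_unity[OF m] by (simp add: bij_betw_def)
  have "(\<lambda>k. cis (2 * pi * real k / real m)) r = (\<lambda>k. cis (2 * pi * real k / real m)) 0"
    using h by (simp add: DeMoivre mult_ac)
  then have "r = 0" using inj_onD[OF inj] r m by simp
  then show False using r by simp
qed

lemma sum_powers_root_of_unity:
  fixes m e :: nat
  assumes m: "m > 0"
  defines "\<omega> \<equiv> cis (2 * pi / real m)"
  shows "(\<Sum>t<m. (\<omega> ^ e) ^ t) = (if m dvd e then of_nat m else 0)"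
proof -
  have wm: "\<omega> ^ m = 1" using m by (simp add: \<omega>_def DeMoivre)
  have "\<omega> ^ e = (\<omega> ^ m) ^ (e div m) * \<omega> ^ (e mod m)" by (simp flip: power_mult power_add)
  then have we: "\<omega> ^ e = \<omega> ^ (e mod m)" using wm by simp
  show ?thesis
  proof (cases "m dvd e")
    case True
    then show ?thesis using we by simp
  next
    case False
    then have "0 < e mod m" "e mod m < m" using m by (auto simp: mod_greater_zero_iff_not_dvd)
    then have ne: "\<omega> ^ e \<noteq> 1" using we cis_pow_neq_1[OF m] by (simp add: \<omega>_def)
    have "(\<omega> ^ e) ^ m = 1" using wm by (metis power_mult mult.commute power_one)
    then show ?thesis using geometric_sum[OF ne, of m] False by simp
  qed
qed

lemma dvd_iff_eq_if_less_double: "0 < (x::nat) \<Longrightarrow> x < 2 * m \<Longrightarrow> m dvd x \<longleftrightarrow> x = m"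
proof
  assume x: "0 < x" "x < 2 * m" and "m dvd x"
  then obtain k where k: "x = m * k" by (auto simp: dvd_def)
  with x have "k \<noteq> 0" "k < 2" by (auto simp: mult.commute[of m])
  then show "x = m" using k by (simp add: less_2_cases_iff)
qed simp

text \<open>Discrete Fourier inversion.\<close>

lemma coeff_zero_if_vanishes_at_roots_of_unity:
  fixes c :: "nat \<Rightarrow> complex"
  assumes m: "m > 0" and van: "\<And>z. z ^ m = 1 \<Longrightarrow> (\<Sum>i<m. c i * z ^ i) = 0" and i0: "i0 < m"
  shows "c i0 = 0"
proof -
  define \<omega> where "\<omega> = cis (2 * pi / real m)"
  have "\<omega> ^ m = 1" using m by (simp add: \<omega>_def DeMoivre)
  then have wt: "(\<omega> ^ t) ^ m = 1" for t by (metis power_mult mult.commute power_one)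
  have "0 = (\<Sum>t<m. (\<omega> ^ t) ^ (m - i0) * (\<Sum>i<m. c i * (\<omega> ^ t) ^ i))"
    using van[OF wt] by simp
  also have "\<dots> = (\<Sum>t<m. \<Sum>i<m. c i * (\<omega> ^ (i + (m - i0))) ^ t)"
  proof -
    have pw: "((w::complex) ^ t) ^ k * (w ^ t) ^ i = (w ^ (i + k)) ^ t" for w t k i
      by (simp flip: power_add power_mult add: algebra_simps)
    show ?thesis
      unfolding sum_distrib_left by (intro sum.cong HOL.refl) (simp add: pw mult.left_commute)
  qed
  also have "\<dots> = (\<Sum>i<m. c i * (\<Sum>t<m. (\<omega> ^ (i + (m - i0))) ^ t))"
    by (subst sum.swap) (simp add: sum_distrib_left)
  also have "\<dots> = (\<Sum>i<m. if i = i0 then c i * of_nat m else 0)"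
  proof (rule sum.cong[OF HOL.refl])
    fix i assume "i \<in> {..<m}"
    then have "m dvd (i + (m - i0)) \<longleftrightarrow> i = i0"
      using i0 dvd_iff_eq_if_less_double[of "i + (m - i0)" m] by auto
    then show "c i * (\<Sum>t<m. (\<omega> ^ (i + (m - i0))) ^ t) = (if i = i0 then c i * of_nat m else 0)"
      using sum_powers_root_of_unity[OF m, of "i + (m - i0)"] by (simp add: \<omega>_def)
  qed
  also have "\<dots> = c i0 * of_nat m" using i0 by simp
  finally show ?thesis using m by simp
qed

text \<open>For a doubly periodic solution of \<open>K (i+1) (j+1) = K i (j+1) + K (i+1) j\<close>, the column
  generating function satisfies \<open>F j = (1 - z) F (j + 1)\<close> at every \<open>m\<close>-th root of unity \<open>z\<close>.\<close>

lemma pascal_generating_function_eq_0: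
  fixes K :: "nat \<Rightarrow> nat \<Rightarrow> int" and z :: complex
  assumes perA: "\<And>i j. K (i + m) j = K i j" and perB: "\<And>i j. K i (j + n) = K i j"
    and rec: "\<And>i j. K (Suc i) (Suc j) = K i (Suc j) + K (Suc i) j"
    and zm: "z ^ m = 1" and zn: "(1 - z) ^ n \<noteq> 1"
  shows "(\<Sum>i<m. of_int (K i j) * z ^ i) = 0"
proof -
  define F where "F = (\<lambda>j. \<Sum>i<m. of_int (K i j) * z ^ i)"
  have shift: "F j = (\<Sum>i<m. of_int (K (Suc i) j) * z ^ Suc i)" for j
    unfolding F_def
    by (rule sum_lessThan_shift_periodic[where h = "\<lambda>i. of_int (K i j) * z ^ i", symmetric])
      (use perA[of 0] zm in simp)
  have step: "F j = (1 - z) * F (Suc j)" for j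
  proof -
    have "F (Suc j) = (\<Sum>i<m. of_int (K i (Suc j) + K (Suc i) j) * z ^ Suc i)"
      unfolding shift rec ..
    also have "\<dots> = z * F (Suc j) + (\<Sum>i<m. of_int (K (Suc i) j) * z ^ Suc i)"
      unfolding F_def by (simp add: algebra_simps sum.distrib sum_distrib_left)
    also have "\<dots> = z * F (Suc j) + F j"
      using shift[of j] by simp
    finally show ?thesis by (simp add: algebra_simps)
  qed
  have iter: "F j = (1 - z) ^ k * F (j + k)" for k
  proof (induction k)
    case (Suc k)
    then show ?case using step[of "j + k"] by (simp add: algebra_simps)
  qed simp
  have "F (j + n) = F j" unfolding F_def by (simp add: perB)
  with iter[of n] have "(1 - (1 - z) ^ n) * F j = 0" by (simp add: algebra_simps)
  with zn show ?thesis by (simp add: F_def)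
qed

lemma periodic_pascal_eq_0:
  fixes K :: "nat \<Rightarrow> nat \<Rightarrow> int" and m n :: nat
  assumes m: "m > 0" and n: "n > 0"
    and perA: "\<And>i j. K (i + m) j = K i j" and perB: "\<And>i j. K i (j + n) = K i j"
    and rec: "\<And>i j. K (Suc i) (Suc j) = K i (Suc j) + K (Suc i) j"
    and no6: "\<not> (6 dvd m \<and> 6 dvd n)"
  shows "K i j = 0"
proof -
  have "of_int (K (i mod m) j) = (0::complex)"
  proof (rule coeff_zero_if_vanishes_at_roots_of_unity[OF m, where c = "\<lambda>i. of_int (K i j)"])
    fix z :: complex assume zm: "z ^ m = 1"
    then have "(1 - z) ^ n \<noteq> 1" using six_dvd_if_roots_of_unity[OF zm _ m n] no6 by blast
    then show "(\<Sum>i<m. of_int (K i j) * z ^ i) = 0"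
      using pascal_generating_function_eq_0[OF perA perB rec zm] by blast
  qed (use m in simp)
  moreover have "K (i mod m + m * k) j = K (i mod m) j" for k
  proof (induction k)
    case (Suc k)
    have "K (i mod m + m * Suc k) j = K ((i mod m + m * k) + m) j" by (simp add: algebra_simps)
    also have "\<dots> = K (i mod m + m * k) j" by (rule perA)
    finally show ?case using Suc.IH by simp
  qed simp
  ultimately show ?thesis by (metis mod_mult_div_eq of_int_eq_0_iff)
qed

lemma image_mset_Union: "image_mset f (\<Sum>\<^sub># M) = \<Sum>\<^sub># (image_mset (image_mset f) M)"
  by (induction M) auto

text \<open>The elements \<open>a\<close> and \<open>b\<close> play the roles of \<open>\<alpha>\<close> and \<open>\<beta>\<close> in \<open>xy = \<alpha>x + \<beta>y\<close>.\<close>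

locale affine_groupoid = comm_group G for G (structure) +
  fixes a b
  assumes a_closed [simp]: "a \<in> carrier G" and b_closed [simp]: "b \<in> carrier G"
begin

definition weight :: "nat \<times> nat \<Rightarrow> 'a" where
  "weight w = a [^] fst w \<otimes> b [^] snd w"

lemma weight_closed [simp]: "weight w \<in> carrier G"
  by (simp add: weight_def)

lemma weight_0 [simp]: "weight (0, 0) = \<one>"
  by (simp add: weight_def)

lemma weight_Suc_left: "weight (Suc i, j) = a \<otimes> weight (i, j)"
  by (simp add: weight_def nat_pow_Suc2 m_assoc m_lcomm)

lemma weight_Suc_right: "weight (i, Suc j) = b \<otimes> weight (i, j)"
  by (simp add: weight_def nat_pow_Suc2 m_ac)

lemma weight_add: "weight (i + i', j + j') = weight (i, j) \<otimes> weight (i', j')"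
  by (simp add: weight_def nat_pow_mult[symmetric] m_ac)

definition weighted_leaves :: "gterm \<Rightarrow> ('a \<times> nat) multiset" where
  "weighted_leaves t = image_mset (apfst weight) (leaf_depths t)"

definition inner_weights :: "gterm \<Rightarrow> 'a multiset" where
  "inner_weights t = image_mset weight (inner_depths t)"

lemma weighted_leaves_Var [simp]: "weighted_leaves (Var x) = {#(\<one>, x)#}"
  by (simp add: weighted_leaves_def)

lemma inner_weights_Var [simp]: "inner_weights (Var x) = {#}"
  by (simp add: inner_weights_def)

lemma weighted_leaves_Op:
  "weighted_leaves (Op s t) =
     image_mset (apfst ((\<otimes>) a)) (weighted_leaves s) + image_mset (apfst ((\<otimes>) b)) (weighted_leaves t)"
  by (simp add: weighted_leaves_def shift_left_var_def shift_right_var_def multiset.map_comp o_def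
      case_prod_beta weight_Suc_left weight_Suc_right apfst_def map_prod_def)

lemma inner_weights_Op:
  "inner_weights (Op s t) =
     {#\<one>#} + image_mset ((\<otimes>) a) (inner_weights s) + image_mset ((\<otimes>) b) (inner_weights t)"
  by (simp add: inner_weights_def shift_left_def shift_right_def multiset.map_comp o_def case_prod_beta
      weight_Suc_left weight_Suc_right)

lemma weighted_leaves_carrier: "z \<in># weighted_leaves t \<Longrightarrow> fst z \<in> carrier G"
  by (auto simp: weighted_leaves_def)

lemma inner_weights_carrier: "z \<in># inner_weights t \<Longrightarrow> z \<in> carrier G"
  by (auto simp: inner_weights_def)

lemma inner_weights_rename: "inner_weights (subst (\<lambda>z. Var (f z)) t) = inner_weights t"
  by (simp add: inner_weights_def inner_depths_rename)

lemma image_mset_mult_mult: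
  "(\<And>z. z \<in># M \<Longrightarrow> z \<in> carrier G) \<Longrightarrow> c \<in> carrier G \<Longrightarrow> h \<in> carrier G \<Longrightarrow>
   image_mset ((\<otimes>) c) (image_mset ((\<otimes>) h) M) = image_mset ((\<otimes>) (c \<otimes> h)) M"
  unfolding multiset.map_comp by (rule image_mset_cong) (auto simp: m_assoc)

lemma image_mset_apfst_mult_mult:
  "(\<And>z. z \<in># M \<Longrightarrow> fst z \<in> carrier G) \<Longrightarrow> c \<in> carrier G \<Longrightarrow> h \<in> carrier G \<Longrightarrow>
   image_mset (apfst ((\<otimes>) c)) (image_mset (apfst ((\<otimes>) h)) M) = image_mset (apfst ((\<otimes>) (c \<otimes> h))) M"
  unfolding multiset.map_comp
  by (rule image_mset_cong) (auto simp: m_assoc apfst_def map_prod_def split: prod.splits)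

lemma count_image_mset_mult:
  assumes c: "c \<in> carrier G" and g: "g \<in> carrier G" and M: "\<And>z. z \<in># M \<Longrightarrow> z \<in> carrier G"
  shows "count (image_mset ((\<otimes>) c) M) g = count M (inv c \<otimes> g)"
proof -
  have "x \<in> carrier G \<Longrightarrow> c \<otimes> x = g \<longleftrightarrow> x = inv c \<otimes> g" for x
    using c g by (metis inv_closed l_inv m_assoc l_one m_closed r_inv)
  then have "((\<otimes>) c) -` {g} \<inter> set_mset M = {inv c \<otimes> g} \<inter> set_mset M"
    using M by auto
  then show ?thesis
    unfolding count_image_mset by (cases "inv c \<otimes> g \<in># M") (auto simp: count_eq_zero_iff)
qed

section \<open>The identities of \<open>\<int>[G]\<close>\<close>

lemma eval_weighted_leaves:
  assumes env: "\<And>x. env x \<in> grp_ring G"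
  shows "g \<in> carrier G \<Longrightarrow>
    eval G a b env t g = sum_mset (image_mset (\<lambda>(h, x). env x (inv h \<otimes> g)) (weighted_leaves t))"
proof (induction t arbitrary: g)
  case (Op s t)
  have "eval G a b env (Op s t) g = eval G a b env s (inv a \<otimes> g) + eval G a b env t (inv b \<otimes> g)"
    using Op.prems by (simp add: gmult_def)
  also have "\<dots> = sum_mset (image_mset (\<lambda>(h, x). env x (inv h \<otimes> (inv a \<otimes> g))) (weighted_leaves s))
                + sum_mset (image_mset (\<lambda>(h, x). env x (inv h \<otimes> (inv b \<otimes> g))) (weighted_leaves t))"
    using Op.IH Op.prems by simp
  also have "image_mset (\<lambda>(h, x). env x (inv h \<otimes> (inv a \<otimes> g))) (weighted_leaves s)
           = image_mset (\<lambda>(h, x). env x (inv h \<otimes> g)) (image_mset (apfst ((\<otimes>) a)) (weighted_leaves s))"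
    unfolding multiset.map_comp
    by (rule image_mset_cong) (auto dest!: weighted_leaves_carrier simp: inv_mult_group m_assoc Op.prems)
  also have "image_mset (\<lambda>(h, x). env x (inv h \<otimes> (inv b \<otimes> g))) (weighted_leaves t)
           = image_mset (\<lambda>(h, x). env x (inv h \<otimes> g)) (image_mset (apfst ((\<otimes>) b)) (weighted_leaves t))"
    unfolding multiset.map_comp
    by (rule image_mset_cong) (auto dest!: weighted_leaves_carrier simp: inv_mult_group m_assoc Op.prems)
  finally show ?case by (simp add: weighted_leaves_Op)
qed simp

lemma eval_outside_carrier:
  assumes "\<And>x. env x \<in> grp_ring G" and "g \<notin> carrier G"
  shows "eval G a b env t g = 0"
  using assms by (cases t) (auto simp: grp_ring_def gmult_def)

definition point_mass :: "nat \<Rightarrow> nat \<Rightarrow> 'a \<Rightarrow> int" where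
  "point_mass x y h = (if y = x \<and> h = \<one> then 1 else 0)"

lemma point_mass_in_grp_ring: "point_mass x y \<in> grp_ring G"
  by (auto simp: point_mass_def grp_ring_def finite_subset[of _ "{\<one>}"])

lemma eval_point_mass:
  assumes g: "g \<in> carrier G"
  shows "eval G a b (point_mass x) t g = int (count (weighted_leaves t) (g, x))"
proof -
  have "image_mset (\<lambda>(h, y). point_mass x y (inv h \<otimes> g)) (weighted_leaves t) =
        image_mset (\<lambda>z. if z = (g, x) then 1 else 0) (weighted_leaves t)"
  proof (rule image_mset_cong)
    fix z assume z: "z \<in># weighted_leaves t"
    obtain h y where hy: "z = (h, y)" by force
    have "h \<in> carrier G" using weighted_leaves_carrier[OF z] hy by simp
    then have "inv h \<otimes> g = \<one> \<longleftrightarrow> h = g"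
      using g by (metis inv_closed inv_inv l_inv r_inv inv_equality)
    then show "(case z of (h, y) \<Rightarrow> point_mass x y (inv h \<otimes> g)) = (if z = (g, x) then 1 else 0)"
      by (auto simp: hy point_mass_def)
  qed
  then show ?thesis
    using eval_weighted_leaves[OF point_mass_in_grp_ring g] by (simp add: sum_mset_delta)
qed

lemma Sigma_id_iff: "(p, q) \<in> Sigma_id G a b \<longleftrightarrow> weighted_leaves p = weighted_leaves q"
proof
  assume L: "weighted_leaves p = weighted_leaves q"
  show "(p, q) \<in> Sigma_id G a b"
    unfolding Sigma_id_def
  proof (clarsimp, rule ext)
    fix env :: "nat \<Rightarrow> 'a \<Rightarrow> int" and g assume env: "\<forall>x. env x \<in> grp_ring G"
    with L show "eval G a b env p g = eval G a b env q g"
      using eval_weighted_leaves[of env g] eval_outside_carrier[of env g] by (cases "g \<in> carrier G") auto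
  qed
next
  assume S: "(p, q) \<in> Sigma_id G a b"
  show "weighted_leaves p = weighted_leaves q"
  proof (rule multiset_eqI)
    fix z :: "'a \<times> nat"
    obtain g x where z: "z = (g, x)" by force
    show "count (weighted_leaves p) z = count (weighted_leaves q) z"
    proof (cases "g \<in> carrier G")
      case True
      have "eval G a b (point_mass x) p g = eval G a b (point_mass x) q g"
        using S point_mass_in_grp_ring by (auto simp: Sigma_id_def)
      then show ?thesis using eval_point_mass[OF True] z by simp
    next
      case False
      then show ?thesis using z weighted_leaves_carrier by (metis count_inI fst_conv)
    qed
  qed
qed

abbreviation Sigma_interchange :: "(gterm \<times> gterm) set" where
  "Sigma_interchange \<equiv> Sigma_id G a b \<inter> {e. interchange_law e}"

lemma weighted_leaves_subst:
  "weighted_leaves (subst \<sigma> t) =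
     \<Sum>\<^sub># (image_mset (\<lambda>(h, x). image_mset (apfst ((\<otimes>) h)) (weighted_leaves (\<sigma> x))) (weighted_leaves t))"
proof (induction t)
  case (Var x)
  have "image_mset (apfst ((\<otimes>) \<one>)) (weighted_leaves (\<sigma> x)) = image_mset id (weighted_leaves (\<sigma> x))"
    by (rule image_mset_cong)
      (auto dest!: weighted_leaves_carrier simp: apfst_def map_prod_def split: prod.splits)
  then show ?case by simp
next
  case (Op s t)
  let ?F = "\<lambda>(h, x). image_mset (apfst ((\<otimes>) h)) (weighted_leaves (\<sigma> x))"
  have "image_mset (apfst ((\<otimes>) c)) (\<Sum>\<^sub># (image_mset ?F (weighted_leaves r))) =
        \<Sum>\<^sub># (image_mset ?F (image_mset (apfst ((\<otimes>) c)) (weighted_leaves r)))"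
    if c: "c \<in> carrier G" for c r
  proof -
    have "image_mset (image_mset (apfst ((\<otimes>) c))) (image_mset ?F (weighted_leaves r)) =
          image_mset ?F (image_mset (apfst ((\<otimes>) c)) (weighted_leaves r))"
      unfolding multiset.map_comp
    proof (rule image_mset_cong)
      fix z assume z: "z \<in># weighted_leaves r"
      obtain h x where hx: "z = (h, x)" by force
      have "h \<in> carrier G" using weighted_leaves_carrier[OF z] hx by simp
      then show "(image_mset (apfst ((\<otimes>) c)) \<circ> ?F) z = (?F \<circ> apfst ((\<otimes>) c)) z"
        unfolding hx using image_mset_apfst_mult_mult[OF weighted_leaves_carrier c] by simp
    qed
    then show ?thesis by (simp add: image_mset_Union)
  qed
  then show ?case using Op by (simp add: weighted_leaves_Op)
qed

lemma inner_weights_subst: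
  "inner_weights (subst \<sigma> t) = inner_weights t +
     \<Sum>\<^sub># (image_mset (\<lambda>(h, x). image_mset ((\<otimes>) h) (inner_weights (\<sigma> x))) (weighted_leaves t))"
proof (induction t)
  case (Var x)
  have "image_mset ((\<otimes>) \<one>) (inner_weights (\<sigma> x)) = image_mset id (inner_weights (\<sigma> x))"
    by (rule image_mset_cong) (auto dest!: inner_weights_carrier)
  then show ?case by simp
next
  case (Op s t)
  let ?F = "\<lambda>(h, x). image_mset ((\<otimes>) h) (inner_weights (\<sigma> x))"
  have "image_mset ((\<otimes>) c) (\<Sum>\<^sub># (image_mset ?F (weighted_leaves r))) =
        \<Sum>\<^sub># (image_mset ?F (image_mset (apfst ((\<otimes>) c)) (weighted_leaves r)))"
    if c: "c \<in> carrier G" for c r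
  proof -
    have "image_mset (image_mset ((\<otimes>) c)) (image_mset ?F (weighted_leaves r)) =
          image_mset ?F (image_mset (apfst ((\<otimes>) c)) (weighted_leaves r))"
      unfolding multiset.map_comp
    proof (rule image_mset_cong)
      fix z assume z: "z \<in># weighted_leaves r"
      obtain h x where hx: "z = (h, x)" by force
      have "h \<in> carrier G" using weighted_leaves_carrier[OF z] hx by simp
      then show "(image_mset ((\<otimes>) c) \<circ> ?F) z = (?F \<circ> apfst ((\<otimes>) c)) z"
        unfolding hx using image_mset_mult_mult[OF inner_weights_carrier c] by simp
    qed
    then show ?thesis by (simp add: image_mset_Union)
  qed
  then show ?case using Op by (simp add: inner_weights_Op weighted_leaves_Op)
qed

text \<open>An interchange law has the same tree shape on both sides.\<close>

lemma eq_cons_interchange_invariant: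
  assumes "(s, t) \<in> eq_cons Sigma_interchange"
  shows "weighted_leaves s = weighted_leaves t \<and> inner_weights s = inner_weights t"
proof -
  have "weighted_leaves (fst e) = weighted_leaves (snd e) \<and> inner_weights (fst e) = inner_weights (snd e)"
    if "e \<in> eq_cons Sigma_interchange" for e
    using that
  proof (induction rule: eq_cons.induct)
    case (ax e)
    obtain p q where e: "e = (p, q)" by force
    with ax obtain x y where "q = subst (\<lambda>z. Var (swap_var x y z)) p"
      by (auto simp: interchange_law_def)
    with ax e show ?case by (simp add: Sigma_id_iff inner_weights_rename)
  qed (simp_all add: weighted_leaves_subst inner_weights_subst weighted_leaves_Op inner_weights_Op)
  from this[OF assms] show ?thesis by simp
qed

lemma count_image_mset_involution:
  assumes "\<And>x. f (f x) = x"
  shows "count (image_mset f M) y = count M (f y)"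
proof -
  have "f x = y \<longleftrightarrow> x = f y" for x using assms by metis
  then have "f -` {y} = {f y}" by auto
  then show ?thesis
    unfolding count_image_mset by (cases "f y \<in># M") (auto simp: count_eq_zero_iff)
qed

lemma swap_at_in_eq_cons:
  assumes pT: "p \<in> pos T" and qT: "q \<in> pos T" and pq: "p \<parallel> q"
    and w: "weight (depth p) = weight (depth q)"
  shows "(T, swap_at T p q) \<in> eq_cons Sigma_interchange"
proof -
  define P where "P = linearize T {p, q} []"
  define sw where "sw = swap_var (pos_code p) (pos_code q)"
  define \<sigma> where "\<sigma> = (\<lambda>c. subt_at T (inv_into UNIV pos_code c))"
  note inst = linear_interchange_instance[OF pT qT pq, folded P_def sw_def \<sigma>_def]
  have count_code: "count (weighted_leaves P) (g, pos_code r) = card ({r} \<inter> {u. weight (depth u) = g})"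
    if r: "{u \<in> pos P. var_at P u = Some (pos_code r)} = {r}" for g r
  proof -
    have "{u \<in> pos P. var_at P u = Some (pos_code r) \<and> weight (depth u) = g} =
          {r} \<inter> {u. weight (depth u) = g}"
      using r by blast
    then show ?thesis unfolding weighted_leaves_def count_image_leaf_depths by simp
  qed
  have count_swap: "count (weighted_leaves P) (g, pos_code p) = count (weighted_leaves P) (g, pos_code q)"
    for g
    using count_code[OF inst(4)] count_code[OF inst(5)] w by (cases "weight (depth p) = g") auto
  have LQ: "weighted_leaves (subst (\<lambda>z. Var (sw z)) P) = image_mset (apsnd sw) (weighted_leaves P)"
    unfolding weighted_leaves_def leaf_depths_rename multiset.map_comp
    by (rule image_mset_cong) (auto simp: apfst_def apsnd_def map_prod_def)
  have "weighted_leaves (subst (\<lambda>z. Var (sw z)) P) = weighted_leaves P"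
  proof (rule multiset_eqI)
    fix z :: "'a \<times> nat"
    obtain g c where z: "z = (g, c)" by force
    have inv: "\<And>y. apsnd sw (apsnd sw y) = y"
      by (simp add: apsnd_def map_prod_def sw_def swap_var_def split: prod.splits)
    have "count (weighted_leaves (subst (\<lambda>z. Var (sw z)) P)) z = count (weighted_leaves P) (g, sw c)"
      unfolding LQ z using count_image_mset_involution[OF inv, of _ "(g, c)"] by simp
    also have "\<dots> = count (weighted_leaves P) z"
      using count_swap z by (auto simp: sw_def swap_var_def)
    finally show "count (weighted_leaves (subst (\<lambda>z. Var (sw z)) P)) z = count (weighted_leaves P) z" .
  qed
  with inst(1) have "(P, subst (\<lambda>z. Var (sw z)) P) \<in> eq_cons Sigma_interchange"
    by (auto simp: Sigma_id_iff intro: eq_cons.ax)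
  then have "(subst \<sigma> P, subst \<sigma> (subst (\<lambda>z. Var (sw z)) P)) \<in> eq_cons Sigma_interchange"
    by (rule eq_cons.subst)
  then show ?thesis using inst(2,3) by simp
qed

theorem eq_cons_interchange_iff:
  "(S, T) \<in> eq_cons Sigma_interchange \<longleftrightarrow>
   weighted_leaves S = weighted_leaves T \<and> inner_weights S = inner_weights T"
proof
  assume eq: "weighted_leaves S = weighted_leaves T \<and> inner_weights S = inner_weights T"
  have "image_mset weight (inner_depths S) = image_mset weight (inner_depths T) \<Longrightarrow>
    image_mset (apfst weight) (leaf_depths S) = image_mset (apfst weight) (leaf_depths T) \<Longrightarrow>
    (S, T) \<in> eq_cons Sigma_interchange"
  proof (rule swap_connected[where \<phi> = weight])
    show "\<And>T p q. p \<in> pos T \<Longrightarrow> q \<in> pos T \<Longrightarrow> p \<parallel> q \<Longrightarrow> weight (depth p) = weight (depth q) \<Longrightarrow>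
      (T, swap_at T p q) \<in> eq_cons Sigma_interchange"
      by (rule swap_at_in_eq_cons)
    show "\<And>s t. (s, t) \<in> eq_cons Sigma_interchange \<Longrightarrow>
      image_mset weight (inner_depths s) = image_mset weight (inner_depths t)"
      using eq_cons_interchange_invariant by (simp add: inner_weights_def)
    show "\<And>s t. (s, t) \<in> eq_cons Sigma_interchange \<Longrightarrow>
      image_mset (apfst weight) (leaf_depths s) = image_mset (apfst weight) (leaf_depths t)"
      using eq_cons_interchange_invariant by (simp add: weighted_leaves_def)
  qed (auto intro: eq_cons.refl eq_cons.sym eq_cons.trans)
  with eq show "(S, T) \<in> eq_cons Sigma_interchange"
    by (simp add: weighted_leaves_def inner_weights_def)
qed (rule eq_cons_interchange_invariant)

lemma is_basis_interchange_iff: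
  "is_basis Sigma_interchange (Sigma_id G a b) \<longleftrightarrow>
    (\<forall>S T. weighted_leaves S = weighted_leaves T \<longrightarrow> inner_weights S = inner_weights T)"
proof
  assume "is_basis Sigma_interchange (Sigma_id G a b)"
  then have basis: "eq_cons Sigma_interchange = Sigma_id G a b" unfolding is_basis_def .
  show "\<forall>S T. weighted_leaves S = weighted_leaves T \<longrightarrow> inner_weights S = inner_weights T"
  proof (intro allI impI)
    fix S T assume "weighted_leaves S = weighted_leaves T"
    then have "(S, T) \<in> eq_cons Sigma_interchange"
      unfolding basis by (simp add: Sigma_id_iff)
    then show "inner_weights S = inner_weights T" by (simp add: eq_cons_interchange_iff)
  qed
next
  assume determined: "\<forall>S T. weighted_leaves S = weighted_leaves T \<longrightarrow> inner_weights S = inner_weights T"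
  have iff: "(S, T) \<in> eq_cons Sigma_interchange \<longleftrightarrow> (S, T) \<in> Sigma_id G a b" for S T
    unfolding eq_cons_interchange_iff Sigma_id_iff using determined by blast
  show "is_basis Sigma_interchange (Sigma_id G a b)"
    unfolding is_basis_def
  proof (rule Set.set_eqI)
    fix e :: "gterm \<times> gterm"
    show "e \<in> eq_cons Sigma_interchange \<longleftrightarrow> e \<in> Sigma_id G a b" using iff by (cases e) simp
  qed
qed

section \<open>Leaf weights determine inner weights unless \<open>6\<close> divides both orders\<close>

definition leaf_weights :: "gterm \<Rightarrow> 'a multiset" where
  "leaf_weights t = image_mset fst (weighted_leaves t)"

lemma inner_weights_leaf_weights_rel:
  "inner_weights t + leaf_weights t =
     {#\<one>#} + image_mset ((\<otimes>) a) (inner_weights t) + image_mset ((\<otimes>) b) (inner_weights t)"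
proof -
  have "image_mset weight (shift_left M) = image_mset ((\<otimes>) a) (image_mset weight M)" for M
    by (simp add: shift_left_def multiset.map_comp o_def case_prod_beta weight_Suc_left)
  moreover have "image_mset weight (shift_right M) = image_mset ((\<otimes>) b) (image_mset weight M)" for M
    by (simp add: shift_right_def multiset.map_comp o_def case_prod_beta weight_Suc_right)
  moreover have "image_mset weight (image_mset fst (leaf_depths t)) = leaf_weights t"
    by (simp add: leaf_weights_def weighted_leaves_def multiset.map_comp o_def)
  ultimately show ?thesis
    using arg_cong[OF inner_leaf_depths_rel[of t], of "image_mset weight"]
    by (simp add: inner_weights_def)
qed

lemma count_inner_weights_rec:
  assumes g: "g \<in> carrier G"
  shows "count (inner_weights t) g + count (leaf_weights t) g =
    (if g = \<one> then 1 else 0) + count (inner_weights t) (inv a \<otimes> g) + count (inner_weights t) (inv b \<otimes> g)"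
  using arg_cong[OF inner_weights_leaf_weights_rel[of t], of "\<lambda>M. count M g"]
    count_image_mset_mult[OF a_closed g inner_weights_carrier]
    count_image_mset_mult[OF b_closed g inner_weights_carrier]
  by auto

lemma leaf_weights_determine_inner_weights:
  fixes m n :: nat
  assumes am: "a [^] m = \<one>" and bn: "b [^] n = \<one>" and m: "m > 0" and n: "n > 0"
    and gen: "carrier G \<subseteq> range weight"
    and no6: "\<not> (6 dvd m \<and> 6 dvd n)"
    and W: "leaf_weights S = leaf_weights T"
  shows "inner_weights S = inner_weights T"
proof -
  define k where "k = (\<lambda>g. int (count (inner_weights S) g) - int (count (inner_weights T) g))"
  define K where "K = (\<lambda>i j. k (weight (i, j)))"
  have "K (i + m) j = K i j" for i j
    using weight_add[of i m j 0] am by (simp add: K_def weight_def)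
  moreover have "K i (j + n) = K i j" for i j
    using weight_add[of i 0 j n] bn by (simp add: K_def weight_def)
  moreover have "K (Suc i) (Suc j) = K i (Suc j) + K (Suc i) j" for i j
  proof -
    have "inv a \<otimes> weight (Suc i, Suc j) = weight (i, Suc j)"
      by (simp add: weight_Suc_left m_assoc[symmetric])
    moreover have "inv b \<otimes> weight (Suc i, Suc j) = weight (Suc i, j)"
      by (simp add: weight_Suc_right m_assoc[symmetric])
    ultimately show ?thesis
      using count_inner_weights_rec[of "weight (Suc i, Suc j)" S]
        count_inner_weights_rec[of "weight (Suc i, Suc j)" T] W
      by (simp add: K_def k_def)
  qed
  ultimately have K0: "K i j = 0" for i j by (rule periodic_pascal_eq_0[OF m n _ _ _ no6])
  show ?thesis
  proof (rule multiset_eqI)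
    fix g
    show "count (inner_weights S) g = count (inner_weights T) g"
    proof (cases "g \<in> carrier G")
      case True
      then obtain w where "g = weight w" using gen by auto
      then have "k g = 0" using K0[of "fst w" "snd w"] by (simp add: K_def)
      then show ?thesis by (simp add: k_def)
    next
      case False
      then show ?thesis using inner_weights_carrier by (metis count_inI)
    qed
  qed
qed

end

section \<open>Two terms separated only by their inner weights\<close>

fun zig :: "nat \<Rightarrow> gterm" where
  "zig 0 = Var 0"
| "zig (Suc k) = Op (Var 0) (Op (zig k) (Var 0))"

fun zag :: "nat \<Rightarrow> gterm" where
  "zag 0 = Var 0"
| "zag (Suc k) = Op (Op (Var 0) (zag k)) (Var 0)"

fun comb :: "(nat \<Rightarrow> gterm) \<Rightarrow> nat \<Rightarrow> nat \<Rightarrow> gterm" where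
  "comb h d 0 = Var 0"
| "comb h d (Suc r) = Op (h d) (comb h (Suc d) r)"

definition zig_comb :: "nat \<Rightarrow> nat \<Rightarrow> gterm" where
  "zig_comb L n = comb (\<lambda>e. if e mod 6 = 2 then zig L else Var 0) 0 n"

definition zag_comb :: "nat \<Rightarrow> nat \<Rightarrow> gterm" where
  "zag_comb L n = comb (\<lambda>e. if e mod 6 = 0 then zag L else Var 0) 0 n"

lemma vars_zig: "vars (zig k) = {0}"
  by (induction k) auto

lemma vars_zag: "vars (zag k) = {0}"
  by (induction k) auto

lemma vars_comb: "(\<And>d. vars (h d) = {0}) \<Longrightarrow> vars (comb h d r) = {0}"
  by (induction r arbitrary: d) auto

lemma image_mset_sum: "image_mset f (sum F A) = (\<Sum>x\<in>A. image_mset f (F x))"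
  by (induction A rule: infinite_finite_induct) auto

lemma in_sum_mset_imp: "finite A \<Longrightarrow> z \<in># sum F A \<Longrightarrow> \<exists>x\<in>A. z \<in># F x"
  by (induction A rule: finite_induct) auto

lemma sum_lessThan_mult_if_mod:
  fixes f :: "nat \<Rightarrow> 'a::comm_monoid_add"
  assumes r: "r < k"
  shows "(\<Sum>e<k * q. if e mod k = r then f e else 0) = (\<Sum>s<q. f (k * s + r))"
proof (induction q)
  case (Suc q)
  have "{..<k * Suc q} = {..<k * q} \<union> {k * q..<k * q + k}" by auto
  then have "(\<Sum>e<k * Suc q. if e mod k = r then f e else 0) =
     (\<Sum>e<k * q. if e mod k = r then f e else 0) + (\<Sum>e\<in>{k * q..<k * q + k}. if e mod k = r then f e else 0)"
    by (simp add: sum.union_disjoint ivl_disj_int)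
  also have "(\<Sum>e\<in>{k * q..<k * q + k}. if e mod k = r then f e else 0) =
      (\<Sum>i<k. if (k * q + i) mod k = r then f (k * q + i) else 0)"
    by (rule sum.reindex_bij_witness[where j = "\<lambda>e. e - k * q" and i = "\<lambda>i. k * q + i"]) auto
  also have "\<dots> = (\<Sum>i<k. if i = r then f (k * q + i) else 0)"
    by (intro sum.cong HOL.refl) auto
  also have "\<dots> = f (k * q + r)" using r by simp
  finally show ?case using Suc by simp
qed simp

context affine_groupoid
begin

lemma leaf_weights_Var [simp]: "leaf_weights (Var x) = {#\<one>#}"
  by (simp add: leaf_weights_def)

lemma leaf_weights_Op:
  "leaf_weights (Op s t) = image_mset ((\<otimes>) a) (leaf_weights s) + image_mset ((\<otimes>) b) (leaf_weights t)"
  by (simp add: leaf_weights_def weighted_leaves_Op multiset.map_comp o_def)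

lemma leaf_weights_carrier: "z \<in># leaf_weights t \<Longrightarrow> z \<in> carrier G"
  by (auto simp: leaf_weights_def dest: weighted_leaves_carrier)

lemma weighted_leaves_if_one_var:
  assumes "vars t = {x}"
  shows "weighted_leaves t = image_mset (\<lambda>g. (g, x)) (leaf_weights t)"
proof -
  have "weighted_leaves t = image_mset (\<lambda>z. (fst z, x)) (weighted_leaves t)"
    unfolding weighted_leaves_def multiset.map_comp
    by (rule image_mset_cong)
      (use leaf_depths_vars assms in \<open>auto simp: apfst_def map_prod_def split: prod.splits\<close>)
  then show ?thesis by (simp add: leaf_weights_def multiset.map_comp o_def)
qed

definition diag :: "nat \<Rightarrow> 'a \<Rightarrow> 'a multiset" where
  "diag k c = (\<Sum>t<k. {#c \<otimes> (a \<otimes> b) [^] t#})"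

lemma diag_0 [simp]: "diag 0 c = {#}"
  by (simp add: diag_def)

lemma diag_Suc: "c \<in> carrier G \<Longrightarrow> diag (Suc k) c = {#c#} + image_mset ((\<otimes>) (a \<otimes> b)) (diag k c)"
  unfolding diag_def image_mset_sum
  by (simp add: sum.lessThan_Suc_shift m_ac del: sum.lessThan_Suc)

lemma diag_mult: "x \<in> carrier G \<Longrightarrow> c \<in> carrier G \<Longrightarrow> image_mset ((\<otimes>) x) (diag k c) = diag k (x \<otimes> c)"
  unfolding diag_def image_mset_sum by (simp add: m_assoc)

lemma diag_rotate:
  assumes L: "(a \<otimes> b) [^] L = \<one>" and c: "c \<in> carrier G"
  shows "diag L (c \<otimes> (a \<otimes> b)) = diag L c"
proof -
  define f :: "nat \<Rightarrow> 'a multiset" where "f = (\<lambda>t. {#c \<otimes> (a \<otimes> b) [^] t#})"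
  have "(a \<otimes> b) [^] Suc t = (a \<otimes> b) \<otimes> (a \<otimes> b) [^] t" for t
    by (rule nat_pow_Suc2) simp
  then have "c \<otimes> (a \<otimes> b) \<otimes> (a \<otimes> b) [^] t = c \<otimes> (a \<otimes> b) [^] Suc t" for t
    by (simp add: m_assoc c)
  then have "diag L (c \<otimes> (a \<otimes> b)) = (\<Sum>t<L. f (Suc t))"
    unfolding diag_def f_def by simp
  also have "\<dots> = (\<Sum>t<L. f t)" by (rule sum_lessThan_shift_periodic) (simp add: f_def L c)
  finally show ?thesis by (simp add: diag_def f_def)
qed

lemma mult_pow_eq_weight: "(a \<otimes> b) [^] (t::nat) = weight (t, t)"
  by (simp add: weight_def nat_pow_distrib)

lemma in_diag_imp: "c \<in> carrier G \<Longrightarrow> z \<in># diag k c \<Longrightarrow> \<exists>t. z = c \<otimes> weight (t, t)"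
  unfolding diag_def using in_sum_mset_imp[of "{..<k}" z "\<lambda>t. {#c \<otimes> (a \<otimes> b) [^] t#}"]
  by (auto simp: mult_pow_eq_weight)

lemma in_diag_self: "c \<in> carrier G \<Longrightarrow> k > 0 \<Longrightarrow> c \<in># diag k c"
  unfolding diag_def by (cases k) (auto simp: sum.lessThan_Suc_shift simp del: sum.lessThan_Suc)

lemma leaf_weights_zig: "leaf_weights (zig k) = diag k a + diag k (b \<otimes> b) + {#(a \<otimes> b) [^] k#}"
proof (induction k)
  case (Suc k)
  have "leaf_weights (zig (Suc k)) = {#a#} + {#b \<otimes> b#} + image_mset ((\<otimes>) (a \<otimes> b)) (leaf_weights (zig k))"
    using image_mset_mult_mult[OF leaf_weights_carrier b_closed a_closed]
    by (simp add: leaf_weights_Op m_comm[of b a] add_ac)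
  with Suc show ?case by (simp add: diag_Suc m_ac add_ac)
qed simp

lemma leaf_weights_zag: "leaf_weights (zag k) = diag k (a \<otimes> a) + diag k b + {#(a \<otimes> b) [^] k#}"
proof (induction k)
  case (Suc k)
  have "leaf_weights (zag (Suc k)) = {#a \<otimes> a#} + {#b#} + image_mset ((\<otimes>) (a \<otimes> b)) (leaf_weights (zag k))"
    using image_mset_mult_mult[OF leaf_weights_carrier a_closed b_closed]
    by (simp add: leaf_weights_Op add_ac)
  with Suc show ?case by (simp add: diag_Suc m_ac add_ac)
qed simp

lemma inner_weights_zig: "inner_weights (zig k) = diag k \<one> + diag k b"
proof (induction k)
  case (Suc k)
  have "inner_weights (zig (Suc k)) = {#\<one>#} + {#b#} + image_mset ((\<otimes>) (a \<otimes> b)) (inner_weights (zig k))"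
    using image_mset_mult_mult[OF inner_weights_carrier b_closed a_closed]
    by (simp add: inner_weights_Op m_comm[of b a] add_ac)
  with Suc show ?case by (simp add: diag_Suc add_ac)
qed simp

lemma inner_weights_zag: "inner_weights (zag k) = diag k \<one> + diag k a"
proof (induction k)
  case (Suc k)
  have "inner_weights (zag (Suc k)) = {#\<one>#} + {#a#} + image_mset ((\<otimes>) (a \<otimes> b)) (inner_weights (zag k))"
    using image_mset_mult_mult[OF inner_weights_carrier a_closed b_closed]
    by (simp add: inner_weights_Op add_ac)
  with Suc show ?case by (simp add: diag_Suc add_ac)
qed simp

lemma leaf_weights_comb:
  "leaf_weights (comb h d r) = (\<Sum>e<r. image_mset ((\<otimes>) (a \<otimes> b [^] e)) (leaf_weights (h (d + e)))) + {#b [^] r#}"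
proof (induction r arbitrary: d)
  case 0 then show ?case by simp
next
  case (Suc r)
  have "leaf_weights (comb h d (Suc r)) = image_mset ((\<otimes>) a) (leaf_weights (h d)) +
        (\<Sum>e<r. image_mset ((\<otimes>) b) (image_mset ((\<otimes>) (a \<otimes> b [^] e)) (leaf_weights (h (Suc d + e))))) + {#b \<otimes> b [^] r#}"
    using Suc[of "Suc d"] by (simp add: leaf_weights_Op image_mset_sum add_ac)
  also have "(\<Sum>e<r. image_mset ((\<otimes>) b) (image_mset ((\<otimes>) (a \<otimes> b [^] e)) (leaf_weights (h (Suc d + e)))))
      = (\<Sum>e<r. image_mset ((\<otimes>) (a \<otimes> b [^] Suc e)) (leaf_weights (h (d + Suc e))))"
    by (intro sum.cong HOL.refl)
      (simp add: image_mset_mult_mult[OF leaf_weights_carrier] m_ac)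
  finally show ?case
    by (simp add: sum.lessThan_Suc_shift m_ac add_ac del: sum.lessThan_Suc)
qed

lemma inner_weights_comb:
  "inner_weights (comb h d r) = (\<Sum>e<r. {#b [^] e#} + image_mset ((\<otimes>) (a \<otimes> b [^] e)) (inner_weights (h (d + e))))"
proof (induction r arbitrary: d)
  case 0 then show ?case by simp
next
  case (Suc r)
  have "inner_weights (comb h d (Suc r)) = {#\<one>#} + image_mset ((\<otimes>) a) (inner_weights (h d)) +
        (\<Sum>e<r. {#b \<otimes> b [^] e#} + image_mset ((\<otimes>) b) (image_mset ((\<otimes>) (a \<otimes> b [^] e)) (inner_weights (h (Suc d + e)))))"
    using Suc[of "Suc d"] by (simp add: inner_weights_Op image_mset_sum add_ac)
  also have "(\<Sum>e<r. {#b \<otimes> b [^] e#} + image_mset ((\<otimes>) b) (image_mset ((\<otimes>) (a \<otimes> b [^] e)) (inner_weights (h (Suc d + e)))))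
      = (\<Sum>e<r. {#b [^] Suc e#} + image_mset ((\<otimes>) (a \<otimes> b [^] Suc e)) (inner_weights (h (d + Suc e))))"
    by (intro sum.cong HOL.refl)
      (simp add: image_mset_mult_mult[OF inner_weights_carrier] m_ac)
  finally show ?case
    by (simp add: sum.lessThan_Suc_shift m_ac add_ac del: sum.lessThan_Suc)
qed


text \<open>The leaf weights agree because \<open>diag L c\<close> only depends on \<open>c\<close> modulo \<open>\<alpha>\<beta>\<close>, and
  modulo \<open>\<alpha>\<beta>\<close> we have \<open>\<alpha>\<beta>\<^bsup>e+2\<^esup>\<alpha> \<equiv> \<alpha>\<beta>\<^bsup>e\<^esup>\<beta>\<close> and \<open>\<alpha>\<beta>\<^bsup>e+2\<^esup>\<beta>\<^sup>2 \<equiv> \<alpha>\<beta>\<^bsup>e+6\<^esup>\<alpha>\<^sup>2\<close>.\<close>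

lemma leaf_weights_zig_comb:
  assumes abL: "(a \<otimes> b) [^] L = \<one>" and q: "n = 6 * q"
  shows "leaf_weights (zig_comb L n) = (\<Sum>e<n. {#a \<otimes> b [^] e#}) +
    (\<Sum>s<q. diag L (a \<otimes> b [^] (6 * s) \<otimes> b) + diag L (a \<otimes> b [^] (6 * Suc s) \<otimes> (a \<otimes> a))) + {#b [^] n#}"
proof -
  define c where "c = (\<lambda>e::nat. a \<otimes> b [^] e)"
  have cC [simp]: "c e \<in> carrier G" for e by (simp add: c_def)
  have rot: "diag L (x \<otimes> (a \<otimes> b)) = diag L x" if "x \<in> carrier G" for x
    using diag_rotate[OF abL that] .
  define tooth where "tooth = (\<lambda>e. diag L (c e \<otimes> a) + diag L (c e \<otimes> (b \<otimes> b)))"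
  have tooth2: "tooth (6 * s + 2) = diag L (c (6 * s) \<otimes> b) + diag L (c (6 * Suc s) \<otimes> (a \<otimes> a))" for s
  proof -
    have "c (6 * s + 2) \<otimes> a = (c (6 * s) \<otimes> b) \<otimes> (a \<otimes> b)"
      by (simp add: c_def numeral_2_eq_2 m_ac)
    moreover have "c (6 * Suc s) \<otimes> (a \<otimes> a) = ((c (6 * s + 2) \<otimes> (b \<otimes> b)) \<otimes> (a \<otimes> b)) \<otimes> (a \<otimes> b)"
    proof -
      have b2: "b [^] (k + 2) = b [^] k \<otimes> b \<otimes> b" for k :: nat
        by (simp add: numeral_2_eq_2)
      have "6 * Suc s = ((6 * s + 2) + 2) + 2" by simp
      then show ?thesis by (simp only: c_def b2) (simp add: m_ac)
    qed
    ultimately show ?thesis by (simp add: tooth_def rot)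
  qed
  have "image_mset ((\<otimes>) (c e)) (leaf_weights (if e mod 6 = 2 then zig L else Var 0)) =
    {#c e#} + (if e mod 6 = 2 then tooth e else {#})" for e
    by (simp add: leaf_weights_zig abL diag_mult tooth_def m_assoc add_ac)
  then have "leaf_weights (zig_comb L n) =
      (\<Sum>e<n. {#c e#} + (if e mod 6 = 2 then tooth e else {#})) + {#b [^] n#}"
    unfolding zig_comb_def leaf_weights_comb by (simp add: c_def)
  also have "\<dots> = (\<Sum>e<n. {#c e#}) + (\<Sum>e<n. if e mod 6 = 2 then tooth e else {#}) + {#b [^] n#}"
    by (simp only: sum.distrib)
  also have "(\<Sum>e<n. if e mod 6 = 2 then tooth e else {#}) = (\<Sum>s<q. tooth (6 * s + 2))"
    using sum_lessThan_mult_if_mod[where r = 2 and k = 6 and f = tooth] q by simp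
  also have "\<dots> = (\<Sum>s<q. diag L (c (6 * s) \<otimes> b) + diag L (c (6 * Suc s) \<otimes> (a \<otimes> a)))"
    by (simp only: tooth2)
  finally show ?thesis by (simp add: c_def)
qed

lemma leaf_weights_zag_comb:
  assumes abL: "(a \<otimes> b) [^] L = \<one>" and q: "n = 6 * q"
  shows "leaf_weights (zag_comb L n) = (\<Sum>e<n. {#a \<otimes> b [^] e#}) +
    (\<Sum>s<q. diag L (a \<otimes> b [^] (6 * s) \<otimes> b) + diag L (a \<otimes> b [^] (6 * s) \<otimes> (a \<otimes> a))) + {#b [^] n#}"
proof -
  define c where "c = (\<lambda>e::nat. a \<otimes> b [^] e)"
  define tooth where "tooth = (\<lambda>e. diag L (c e \<otimes> b) + diag L (c e \<otimes> (a \<otimes> a)))"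
  have "image_mset ((\<otimes>) (c e)) (leaf_weights (if e mod 6 = 0 then zag L else Var 0)) =
    {#c e#} + (if e mod 6 = 0 then tooth e else {#})" for e
    by (simp add: c_def leaf_weights_zag abL diag_mult tooth_def m_assoc add_ac)
  then have "leaf_weights (zag_comb L n) =
      (\<Sum>e<n. {#c e#} + (if e mod 6 = 0 then tooth e else {#})) + {#b [^] n#}"
    unfolding zag_comb_def leaf_weights_comb by (simp add: c_def)
  also have "\<dots> = (\<Sum>e<n. {#c e#}) + (\<Sum>e<n. if e mod 6 = 0 then tooth e else {#}) + {#b [^] n#}"
    by (simp only: sum.distrib)
  also have "(\<Sum>e<n. if e mod 6 = 0 then tooth e else {#}) = (\<Sum>s<q. tooth (6 * s + 0))"
    using sum_lessThan_mult_if_mod[where r = 0 and k = 6 and f = tooth] q by simp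
  finally show ?thesis by (simp add: tooth_def c_def)
qed

lemma leaf_weights_zig_comb_eq_zag_comb:
  assumes abL: "(a \<otimes> b) [^] L = \<one>" and bn: "b [^] n = \<one>" and q: "n = 6 * q"
  shows "leaf_weights (zig_comb L n) = leaf_weights (zag_comb L n)"
proof -
  define C where "C = (\<lambda>s::nat. diag L (a \<otimes> b [^] (6 * s) \<otimes> (a \<otimes> a)))"
  have "C q = C 0" using q bn by (simp add: C_def)
  then have "(\<Sum>s<q. C (Suc s)) = (\<Sum>s<q. C s)" by (rule sum_lessThan_shift_periodic)
  then show ?thesis
    unfolding leaf_weights_zig_comb[OF abL q] leaf_weights_zag_comb[OF abL q]
    by (simp add: C_def sum.distrib)
qed

lemma inner_weights_zig_comb:
  "inner_weights (zig_comb L n) = (\<Sum>e<n. {#b [^] e#}) +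
    (\<Sum>e<n. if e mod 6 = 2 then diag L (a \<otimes> b [^] e) + diag L (a \<otimes> b [^] e \<otimes> b) else {#})"
proof -
  have "image_mset ((\<otimes>) (a \<otimes> b [^] e)) (inner_weights (if e mod 6 = 2 then zig L else Var 0)) =
    (if e mod 6 = 2 then diag L (a \<otimes> b [^] e) + diag L (a \<otimes> b [^] e \<otimes> b) else {#})" for e :: nat
    by (simp add: inner_weights_zig diag_mult)
  then have "inner_weights (zig_comb L n) = (\<Sum>e<n. {#b [^] e#} +
    (if e mod 6 = 2 then diag L (a \<otimes> b [^] e) + diag L (a \<otimes> b [^] e \<otimes> b) else {#}))"
    unfolding zig_comb_def inner_weights_comb by (intro sum.cong HOL.refl) simp
  then show ?thesis by (simp only: sum.distrib)
qed

lemma inner_weights_zag_comb: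
  "inner_weights (zag_comb L n) = (\<Sum>e<n. {#b [^] e#}) +
    (\<Sum>e<n. if e mod 6 = 0 then diag L (a \<otimes> b [^] e) + diag L (a \<otimes> b [^] e \<otimes> a) else {#})"
proof -
  have "image_mset ((\<otimes>) (a \<otimes> b [^] e)) (inner_weights (if e mod 6 = 0 then zag L else Var 0)) =
    (if e mod 6 = 0 then diag L (a \<otimes> b [^] e) + diag L (a \<otimes> b [^] e \<otimes> a) else {#})" for e :: nat
    by (simp add: inner_weights_zag diag_mult)
  then have "inner_weights (zag_comb L n) = (\<Sum>e<n. {#b [^] e#} +
    (if e mod 6 = 0 then diag L (a \<otimes> b [^] e) + diag L (a \<otimes> b [^] e \<otimes> a) else {#}))"
    unfolding zag_comb_def inner_weights_comb by (intro sum.cong HOL.refl) simp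
  then show ?thesis by (simp only: sum.distrib)
qed

lemma in_zag_tooth_imp:
  assumes "z \<in># diag L (a \<otimes> b [^] e) + diag L (a \<otimes> b [^] e \<otimes> a)"
  shows "\<exists>i t. (i = 1 \<or> i = 2) \<and> z = weight (i + t, e + t)"
proof -
  from assms consider "z \<in># diag L (a \<otimes> b [^] e)" | "z \<in># diag L (a \<otimes> b [^] e \<otimes> a)" by auto
  then show ?thesis
  proof cases
    case 1
    then obtain t where "z = a \<otimes> b [^] e \<otimes> weight (t, t)"
      using in_diag_imp[of "a \<otimes> b [^] e"] by auto
    moreover have "weight (1, e) = a \<otimes> b [^] e" by (simp add: weight_def)
    ultimately have "z = weight (1 + t, e + t)" using weight_add[of 1 t e t] by simp
    then show ?thesis by blast
  next
    case 2
    then obtain t where "z = a \<otimes> b [^] e \<otimes> a \<otimes> weight (t, t)"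
      using in_diag_imp[of "a \<otimes> b [^] e \<otimes> a"] by auto
    moreover have "weight (2, e) = a \<otimes> b [^] e \<otimes> a"
      by (simp add: weight_def numeral_2_eq_2 m_assoc m_comm[of "b [^] e" a])
    ultimately have "z = weight (2 + t, e + t)" using weight_add[of 2 t e t] by simp
    then show ?thesis by blast
  qed
qed

text \<open>The weight \<open>\<beta>\<close> occurs at the root of the first zig, but at no inner node of a zag:
  those at tooth \<open>e\<close> have weights \<open>\<alpha>\<^bsup>1+t\<^esup>\<beta>\<^bsup>e+t\<^esup>\<close> or \<open>\<alpha>\<^bsup>2+t\<^esup>\<beta>\<^bsup>e+t\<^esup>\<close>, and \<open>6\<close> divides
  both orders.\<close>

lemma inner_weights_zig_comb_neq_zag_comb:
  fixes m n :: nat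
  assumes abL: "(a \<otimes> b) [^] L = \<one>" and L: "L > 0" and m6: "6 dvd m" and q: "n = 6 * q" "q > 0"
    and weight_eq: "\<And>i j i' j'. weight (i, j) = weight (i', j') \<Longrightarrow> i mod m = i' mod m \<and> j mod n = j' mod n"
  shows "inner_weights (zig_comb L n) \<noteq> inner_weights (zag_comb L n)"
proof -
  define F where "F = (\<lambda>e::nat. if e mod 6 = 2 then diag L (a \<otimes> b [^] e) + diag L (a \<otimes> b [^] e \<otimes> b) else {#})"
  define ES where "ES = (\<Sum>e<n. F e)"
  define ET where "ET = (\<Sum>e<n. if e mod 6 = 0 then diag L (a \<otimes> b [^] e) + diag L (a \<otimes> b [^] e \<otimes> a) else {#})"
  have "b \<in># ES"
  proof -
    have "a \<otimes> b [^] (2::nat) = b \<otimes> (a \<otimes> b)" by (simp add: numeral_2_eq_2 m_ac)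
    then have "b \<in># diag L (a \<otimes> b [^] (2::nat))"
      using diag_rotate[OF abL b_closed] in_diag_self[OF b_closed L] by simp
    then have "0 < count (F 2) b" by (simp add: F_def)
    also have "count (F 2) b \<le> (\<Sum>e\<in>{..<n}. count (F e) b)"
      by (rule member_le_sum) (use q in auto)
    also have "\<dots> = count ES b" unfolding ES_def count_sum ..
    finally show ?thesis by simp
  qed
  moreover have "b \<notin># ET"
  proof
    assume "b \<in># ET"
    then obtain e :: nat where e6: "e mod 6 = 0"
      and "b \<in># diag L (a \<otimes> b [^] e) + diag L (a \<otimes> b [^] e \<otimes> a)"
      unfolding ET_def by (auto dest!: in_sum_mset_imp[OF finite_lessThan] split: if_splits)
    then obtain i t where it: "i = 1 \<or> i = 2" and "b = weight (i + t, e + t)"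
      using in_zag_tooth_imp by blast
    moreover have "weight (0, 1) = b" by (simp add: weight_def)
    ultimately have bw: "weight (0, 1) = weight (i + t, e + t)" by simp
    from weight_eq[OF bw] have "0 mod 6 = (i + t) mod 6" "1 mod 6 = (e + t) mod 6"
      using m6 q by (metis mod_mod_cancel dvd_triv_left)+
    then have "t mod 6 = 1" and "(i + t) mod 6 = 0"
      using e6 mod_add_left_eq[of e 6 t] by simp_all
    then have "(i + 1) mod 6 = 0" using mod_add_right_eq[of i t 6] by simp
    with it show False by (elim disjE) simp_all
  qed
  ultimately have "count ES b \<noteq> count ET b" by (auto simp: not_in_iff)
  then show ?thesis
    unfolding inner_weights_zig_comb inner_weights_zag_comb F_def[symmetric] ES_def[symmetric]
      ET_def[symmetric]
    by (metis add_left_cancel)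
qed

lemma exists_same_leaves_different_inner_weights:
  fixes m n :: nat
  assumes am: "a [^] m = \<one>" and bn: "b [^] n = \<one>" and m: "m > 0" and n: "n > 0"
    and m6: "6 dvd m" and n6: "6 dvd n"
    and weight_eq: "\<And>i j i' j'. weight (i, j) = weight (i', j') \<Longrightarrow> i mod m = i' mod m \<and> j mod n = j' mod n"
  shows "\<exists>S T. weighted_leaves S = weighted_leaves T \<and> inner_weights S \<noteq> inner_weights T"
proof -
  define L where "L = m * n"
  have "(a \<otimes> b) [^] L = a [^] (m * n) \<otimes> b [^] (n * m)"
    by (simp add: L_def nat_pow_distrib mult.commute)
  then have abL: "(a \<otimes> b) [^] L = \<one>" by (simp add: nat_pow_pow[symmetric] am bn)
  obtain q where q: "n = 6 * q" "q > 0" using n6 n by (auto elim!: dvdE)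
  have "vars (zig_comb L n) = {0}" "vars (zag_comb L n) = {0}"
    unfolding zig_comb_def zag_comb_def by (auto intro!: vars_comb simp: vars_zig vars_zag split: if_splits)
  then have "weighted_leaves (zig_comb L n) = weighted_leaves (zag_comb L n)"
    using leaf_weights_zig_comb_eq_zag_comb[OF abL bn q(1)] by (simp add: weighted_leaves_if_one_var)
  moreover have "inner_weights (zig_comb L n) \<noteq> inner_weights (zag_comb L n)"
    using inner_weights_zig_comb_neq_zag_comb[OF abL _ m6 q weight_eq] m n by (simp add: L_def)
  ultimately show ?thesis by blast
qed

lemma generate_subset_range_weight:
  assumes am: "a [^] (m::nat) = \<one>" and bn: "b [^] (n::nat) = \<one>" and m: "m > 0" and n: "n > 0"
  shows "generate G {a, b} \<subseteq> range weight"
proof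
  fix x assume "x \<in> generate G {a, b}"
  then show "x \<in> range weight"
  proof (induction x rule: generate.induct)
    case one
    then show ?case by (metis weight_0 rangeI)
  next
    case (incl h)
    have "weight (1, 0) = a" "weight (0, 1) = b" by (simp_all add: weight_def)
    with incl show ?case by (metis empty_iff insert_iff rangeI)
  next
    case (inv h)
    have "a [^] (m - 1) \<otimes> a = \<one>" using am m by (metis Suc_diff_1 nat_pow_Suc)
    then have "inv a = weight (m - 1, 0)" by (simp add: weight_def inv_equality)
    moreover have "b [^] (n - 1) \<otimes> b = \<one>" using bn n by (metis Suc_diff_1 nat_pow_Suc)
    then have "inv b = weight (0, n - 1)" by (simp add: weight_def inv_equality)
    ultimately show ?case using inv by (metis empty_iff insert_iff rangeI)
  next
    case (eng h1 h2)
    then obtain w1 w2 where "h1 = weight w1" "h2 = weight w2" by auto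
    then have "h1 \<otimes> h2 = weight (fst w1 + fst w2, snd w1 + snd w2)" by (simp add: weight_add)
    then show ?case by (metis rangeI)
  qed
qed

lemma weight_eq_imp_mod_eq:
  assumes inter: "generate G {a} \<inter> generate G {b} = {\<one>}"
    and eq: "weight (i, j) = weight (i', j')"
  shows "i mod ord a = i' mod ord a \<and> j mod ord b = j' mod ord b"
proof -
  define x where "x = a [^] (int i - int i')"
  define y where "y = b [^] (int j' - int j)"
  have x: "x = a [^] i \<otimes> inv (a [^] i')" by (simp add: x_def int_pow_diff int_pow_int)
  have y: "y = b [^] j' \<otimes> inv (b [^] j)" by (simp add: y_def int_pow_diff int_pow_int)
  have "x = (a [^] i \<otimes> b [^] j) \<otimes> (inv (a [^] i') \<otimes> inv (b [^] j))"
    unfolding x by (simp add: m_ac)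
  also have "\<dots> = a [^] i' \<otimes> (b [^] j' \<otimes> (inv (a [^] i') \<otimes> inv (b [^] j)))"
    using eq by (simp add: weight_def m_assoc)
  also have "\<dots> = b [^] j' \<otimes> (a [^] i' \<otimes> (inv (a [^] i') \<otimes> inv (b [^] j)))"
    by (simp add: m_lcomm)
  also have "\<dots> = y" unfolding y by (simp add: m_assoc[symmetric])
  finally have "x = y" .
  moreover have "x \<in> generate G {a}" "y \<in> generate G {b}"
    using generate_pow[OF a_closed] generate_pow[OF b_closed] by (auto simp: x_def y_def)
  ultimately have "x = \<one>" "y = \<one>" using inter by auto
  then have "int (ord a) dvd (int i - int i')" "int (ord b) dvd (int j' - int j)"
    using int_pow_eq_id[OF a_closed] int_pow_eq_id[OF b_closed] by (auto simp: x_def y_def)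
  then show ?thesis
    by (metis mod_eq_dvd_iff of_nat_eq_iff zmod_int dvd_diff_commute)
qed

theorem interchange_laws_basis_iff:
  assumes gen: "carrier G = generate G {a, b}" and inter: "generate G {a} \<inter> generate G {b} = {\<one>}"
    and ord_a: "ord a = m" and ord_b: "ord b = n" and m: "m > 0" and n: "n > 0"
  shows "is_basis Sigma_interchange (Sigma_id G a b) \<longleftrightarrow> \<not> (6 dvd m \<and> 6 dvd n)"
proof -
  have am: "a [^] m = \<one>" and bn: "b [^] n = \<one>" using ord_a ord_b pow_ord_eq_1 by auto
  have weight_eq: "i mod m = i' mod m \<and> j mod n = j' mod n" if "weight (i, j) = weight (i', j')"
    for i j i' j'
    using weight_eq_imp_mod_eq[OF inter that] ord_a ord_b by simp
  show ?thesis
    unfolding is_basis_interchange_iff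
  proof
    assume determined: "\<forall>S T. weighted_leaves S = weighted_leaves T \<longrightarrow> inner_weights S = inner_weights T"
    show "\<not> (6 dvd m \<and> 6 dvd n)"
    proof
      assume "6 dvd m \<and> 6 dvd n"
      then obtain S T where "weighted_leaves S = weighted_leaves T" "inner_weights S \<noteq> inner_weights T"
        using exists_same_leaves_different_inner_weights[OF am bn m n _ _ weight_eq] by blast
      with determined show False by blast
    qed
  next
    assume no6: "\<not> (6 dvd m \<and> 6 dvd n)"
    have "carrier G \<subseteq> range weight" using generate_subset_range_weight[OF am bn m n] gen by simp
    note determine = leaf_weights_determine_inner_weights[OF am bn m n this no6]
    show "\<forall>S T. weighted_leaves S = weighted_leaves T \<longrightarrow> inner_weights S = inner_weights T"
      by (intro allI impI determine) (simp add: leaf_weights_def)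
  qed
qed

end

theorem theorem9p2:
  fixes G (structure) and \<alpha> \<beta> :: 'a and m n :: nat
  assumes "comm_group G"
    and "\<alpha> \<in> carrier G" and "\<beta> \<in> carrier G"
    and "carrier G = generate G {\<alpha>, \<beta>}"
    and "generate G {\<alpha>} \<inter> generate G {\<beta>} = {\<one>}"
    and "group.ord G \<alpha> = m" and "group.ord G \<beta> = n"
    and "0 < m" and "0 < n"
  shows "is_basis (Sigma_id G \<alpha> \<beta> \<inter> {e. interchange_law e}) (Sigma_id G \<alpha> \<beta>)
         \<longleftrightarrow> \<not> (6 dvd m \<and> 6 dvd n)"
proof -
  interpret affine_groupoid G \<alpha> \<beta>
    using assms(1-3) by (intro affine_groupoid.intro affine_groupoid_axioms.intro)
  show ?thesis by (rule interchange_laws_basis_iff[OF assms(4-9)])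
qed

end
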